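(* Let $T>0$ and $0<\beta<1$. Let $M^D_\beta$ be the Gaussian white noise on $\mathbb{R}\times\mathbb{R}_+$ with control measure $u^{-\beta-1}\mathbf{1}(0<x-u,\ x+u<T)\,dx\,du$ and define $W_\beta(t)=\int_{\mathbb{R}\times\mathbb{R}_+}\mathbf{1}(|t-x|\le u)\,M^D_\beta(dx,du)$, $t\in[0,T]$. Let $B=(B_t)_{t\in[0,T]}$ be standard Brownian motion independent of $W_\beta$, and define the Gaussian martingale \[ Y_\beta(t)=\sqrt{\frac{2^\beta}{\beta}}\int_0^t\sqrt{x^{-\beta}+(T-x)^{-\beta}}\,dB_x,\qquad t\in[0,T]. \] Then $W_\beta+Y_\beta$ is, up to a multiplicative constant, a fractional Brownian motion on $[0,T]$ with Hurst index $H=(1-\beta)/2$.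
   Context: Gaussian white noise with control measure $\nu$: centered Gaussian family $M(A)$ with $\mathrm{Cov}(M(A),M(B))=\nu(A\cap B)$ and its isometric stochastic integral. Fractional Brownian motion with Hurst index $H$ is the centered Gaussian process with covariance $\frac12(|s|^{2H}+|t|^{2H}-|t-s|^{2H})$. *)

theory Defs
  imports "HOL-Probability.Probability"
begin

definition gaussian_rv :: "'a measure \<Rightarrow> ('a \<Rightarrow> real) \<Rightarrow> bool" where
  "gaussian_rv P X \<longleftrightarrow> X \<in> borel_measurable P \<and>
     ((\<exists>\<mu> \<sigma>. \<sigma> > 0 \<and> distributed P lborel X (normal_density \<mu> \<sigma>)) \<or>
      (\<exists>c. AE \<omega> in P. X \<omega> = c))"

definition jointly_gaussian :: "'a measure \<Rightarrow> 'i set \<Rightarrow> ('i \<Rightarrow> 'a \<Rightarrow> real) \<Rightarrow> bool" where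
  "jointly_gaussian P I X \<longleftrightarrow>
     (\<forall>J a. J \<subseteq> I \<longrightarrow> finite J \<longrightarrow> gaussian_rv P (\<lambda>\<omega>. \<Sum>j\<in>J. a j * X j \<omega>))"

definition centered_gaussian_family ::
  "'a measure \<Rightarrow> 'i set \<Rightarrow> ('i \<Rightarrow> 'a \<Rightarrow> real) \<Rightarrow> ('i \<Rightarrow> 'i \<Rightarrow> real) \<Rightarrow> bool" where
  "centered_gaussian_family P I X K \<longleftrightarrow> jointly_gaussian P I X \<and>
     (\<forall>i\<in>I. integral\<^sup>L P (X i) = 0) \<and>
     (\<forall>i\<in>I. \<forall>j\<in>I. integral\<^sup>L P (\<lambda>\<omega>. X i \<omega> * X j \<omega>) = K i j)"

definition gaussian_white_noise :: "'a measure \<Rightarrow> 'b measure \<Rightarrow> ('b set \<Rightarrow> 'a \<Rightarrow> real) \<Rightarrow> bool" where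
  "gaussian_white_noise P \<nu> M \<longleftrightarrow>
     centered_gaussian_family P {A \<in> sets \<nu>. emeasure \<nu> A < \<infinity>} M
       (\<lambda>A B. measure \<nu> (A \<inter> B))"

definition brownian_motion_on :: "'a measure \<Rightarrow> real \<Rightarrow> (real \<Rightarrow> 'a \<Rightarrow> real) \<Rightarrow> bool" where
  "brownian_motion_on P T B \<longleftrightarrow>
     centered_gaussian_family P {0..T} B (\<lambda>s t. min s t) \<and>
     (AE \<omega> in P. continuous_on {0..T} (\<lambda>t. B t \<omega>))"

definition fbm_on :: "'a measure \<Rightarrow> real \<Rightarrow> real \<Rightarrow> (real \<Rightarrow> 'a \<Rightarrow> real) \<Rightarrow> bool" where
  "fbm_on P H T X \<longleftrightarrow>
     centered_gaussian_family P {0..T} X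
       (\<lambda>s t. (\<bar>s\<bar> powr (2*H) + \<bar>t\<bar> powr (2*H) - \<bar>t - s\<bar> powr (2*H)) / 2)"

definition step_fun :: "(real \<times> real \<times> real) list \<Rightarrow> real \<Rightarrow> real" where
  "step_fun l x = (\<Sum>(a, s, t)\<leftarrow>l. a * indicator {s<..t} x)"

definition step_int :: "(real \<Rightarrow> 'a \<Rightarrow> real) \<Rightarrow> (real \<times> real \<times> real) list \<Rightarrow> 'a \<Rightarrow> real" where
  "step_int B l \<omega> = (\<Sum>(a, s, t)\<leftarrow>l. a * (B t \<omega> - B s \<omega>))"

text \<open>X is (a version of) the Wiener integral \<integral>_0^T g dB: the L^2(P)-limit of the
elementary integrals of step functions converging to g in L^2[0,T] (isometric extension).\<close>
definition wiener_integral ::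
  "'a measure \<Rightarrow> real \<Rightarrow> (real \<Rightarrow> 'a \<Rightarrow> real) \<Rightarrow> (real \<Rightarrow> real) \<Rightarrow> ('a \<Rightarrow> real) \<Rightarrow> bool" where
  "wiener_integral P T B g X \<longleftrightarrow> X \<in> borel_measurable P \<and>
     (\<exists>l :: nat \<Rightarrow> (real \<times> real \<times> real) list.
        (\<forall>n. \<forall>(a, s, t)\<in>set (l n). 0 \<le> s \<and> s \<le> t \<and> t \<le> T) \<and>
        ((\<lambda>n. \<integral>\<^sup>+ x. ennreal ((step_fun (l n) x - g x)\<^sup>2) * indicator {0..T} x \<partial>lborel)
           \<longlonglongrightarrow> 0) \<and>
        ((\<lambda>n. \<integral>\<^sup>+ \<omega>. ennreal ((step_int B (l n) \<omega> - X \<omega>)\<^sup>2) \<partial>P) \<longlonglongrightarrow> 0))"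

definition control_measure :: "real \<Rightarrow> real \<Rightarrow> (real \<times> real) measure" where
  "control_measure \<beta> T = density lborel
     (\<lambda>(x, u). ennreal (if 0 < u \<and> 0 < x - u \<and> x + u < T then u powr (-\<beta> - 1) else 0))"

end

theory Submission
  imports Defs
begin

text \<open>W and Y are independent centred Gaussian processes, so their sum is a centred
Gaussian process whose covariance is the sum of the two covariances. Joint Gaussianity
survives the two limiting procedures involved: the Wiener integrals Y t are mean-square
limits of linear combinations of the Brownian motion, and Gaussian laws (identified by
their characteristic functions) are stable under independent sums and mean-square limits.

The covariance of W is the control measure of the intersection of two light cones. In
the null coordinates a = x - u, b = x + u the cones over s \<le> t become the quadrant
a \<le> s, t \<le> b, where the density is 2^\<beta> (b - a)^(-\<beta>-1), so the measure is an
elementary double integral. By the isometry of the Wiener integral, the covariance of Y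
is the integral of its squared kernel over [0, min s t]. With K = 2^\<beta> / (\<beta> (1 - \<beta>))
the two add up to K (s^(1-\<beta>) + t^(1-\<beta>) - |t - s|^(1-\<beta>)), which is 2K times the
covariance of a fractional Brownian motion with Hurst index (1 - \<beta>)/2.\<close>

section \<open>Gaussian variables and characteristic functions\<close>

definition gaussian_char :: "real \<Rightarrow> real \<Rightarrow> real \<Rightarrow> complex" where
  "gaussian_char \<mu> v t = iexp (t * \<mu>) * complex_of_real (exp (- (v * t\<^sup>2) / 2))"

lemma char_normal_density:
  assumes "\<sigma> > 0"
  shows "char (density lborel (normal_density \<mu> \<sigma>)) t = gaussian_char \<mu> (\<sigma>\<^sup>2) t"
proof -
  let ?S = "std_normal_distribution"
  interpret S: prob_space ?S using real_dist_normal_dist real_distribution_def by blast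
  have "distributed ?S lborel (\<lambda>x. x) std_normal_density"
    unfolding distributed_def by (simp add: distr_id2)
  then have "distributed ?S lborel (\<lambda>x. \<mu> + \<sigma> * x) (normal_density (\<mu> + \<sigma> * 0) (\<bar>\<sigma>\<bar> * 1))"
    by (rule S.normal_density_affine) (use assms in auto)
  then have affine: "distr ?S lborel (\<lambda>x. \<mu> + \<sigma> * x) = density lborel (normal_density \<mu> \<sigma>)"
    using assms unfolding distributed_def by simp
  have "char (density lborel (normal_density \<mu> \<sigma>)) t = (CLINT z|?S. iexp (t * (\<mu> + \<sigma> * z)))"
    unfolding char_def affine[symmetric] by (subst integral_distr) auto
  also have "\<dots> = (CLINT z|?S. iexp (t * \<mu>) * iexp ((t * \<sigma>) * z))"
    by (rule Bochner_Integration.integral_cong) (auto simp: exp_add[symmetric] algebra_simps)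
  also have "\<dots> = iexp (t * \<mu>) * char ?S (t * \<sigma>)"
    unfolding char_def by simp
  also have "\<dots> = gaussian_char \<mu> (\<sigma>\<^sup>2) t"
    unfolding char_std_normal_distribution gaussian_char_def by (simp add: power_mult_distrib mult.commute)
  finally show ?thesis .
qed

lemma char_return: "char (return borel \<mu>) t = gaussian_char \<mu> 0 t"
  unfolding char_def gaussian_char_def by (subst integral_return) (auto simp: mult.commute)

lemma gaussian_char_add:
  "gaussian_char \<mu> v t * gaussian_char \<mu>' v' t = gaussian_char (\<mu> + \<mu>') (v + v') t"
  unfolding gaussian_char_def
  by (simp add: exp_add[symmetric] algebra_simps flip: exp_of_real) (simp add: field_simps)

context prob_space
begin

lemma gaussian_rv_measurable: "gaussian_rv M X \<Longrightarrow> X \<in> borel_measurable M"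
  by (simp add: gaussian_rv_def)

lemma normal_rv_char:
  assumes \<sigma>: "\<sigma> > 0" and D: "distributed M lborel X (normal_density \<mu> \<sigma>)"
  shows "integrable M X \<and> integrable M (\<lambda>\<omega>. (X \<omega>)\<^sup>2) \<and>
    char (distr M borel X) t = gaussian_char (expectation X) (variance X) t"
proof -
  have int: "integrable M X"
    using distributed_integrable[OF D, of "\<lambda>x. x"] integrable_normal_moment_nz_1[OF \<sigma>] by simp
  have "integrable M (\<lambda>\<omega>. (X \<omega> - \<mu>)\<^sup>2)"
    using distributed_integrable[OF D, of "\<lambda>x. (x - \<mu>)\<^sup>2"] integrable_normal_moment[OF \<sigma>, of \<mu> 2]
    by simp
  moreover have "(\<lambda>\<omega>. (X \<omega>)\<^sup>2) = (\<lambda>\<omega>. (X \<omega> - \<mu>)\<^sup>2 + 2 * \<mu> * X \<omega> - \<mu>\<^sup>2)"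
    by (auto simp: power2_eq_square algebra_simps)
  ultimately have int2: "integrable M (\<lambda>\<omega>. (X \<omega>)\<^sup>2)"
    using int by simp
  have "distr M borel X = density lborel (normal_density \<mu> \<sigma>)"
    using D unfolding distributed_def by (simp cong: distr_cong)
  then show ?thesis
    using int int2 char_normal_density[OF \<sigma>] normal_distributed_expectation[OF \<sigma> D]
      normal_distributed_variance[OF \<sigma> D] by simp
qed

lemma constant_rv_char:
  assumes X: "X \<in> borel_measurable M" and c: "AE \<omega> in M. X \<omega> = c"
  shows "integrable M X \<and> integrable M (\<lambda>\<omega>. (X \<omega>)\<^sup>2) \<and>
    char (distr M borel X) t = gaussian_char (expectation X) (variance X) t"
proof -
  have "distr M borel X = distr M borel (\<lambda>_. c)"
    by (rule distr_cong_AE) (use X c in auto)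
  also have "\<dots> = return borel c"
    by (rule distr_const) simp
  finally have "distr M borel X = return borel c" .
  moreover have "integrable M X"
    by (rule integrable_cong_AE_imp[of _ "\<lambda>_. c"]) (use X c in auto)
  moreover have "integrable M (\<lambda>\<omega>. (X \<omega>)\<^sup>2)"
    by (rule integrable_cong_AE_imp[of _ "\<lambda>_. c\<^sup>2"]) (use X c in auto)
  moreover have mean: "expectation X = c"
    by (subst integral_cong_AE[where g="\<lambda>_. c"]) (use X c in \<open>auto simp: prob_space\<close>)
  moreover have "variance X = 0"
    by (subst integral_cong_AE[where g="\<lambda>_. 0"]) (use X c mean in auto)
  ultimately show ?thesis
    using char_return by simp
qed

lemma gaussian_rv_char:
  assumes "gaussian_rv M X"
  shows "integrable M X" "integrable M (\<lambda>\<omega>. (X \<omega>)\<^sup>2)"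
    and "char (distr M borel X) t = gaussian_char (expectation X) (variance X) t"
  using assms normal_rv_char constant_rv_char unfolding gaussian_rv_def by metis+

lemma gaussian_rv_if_char:
  assumes X: "X \<in> borel_measurable M" and "v \<ge> 0"
    and char: "\<And>t. char (distr M borel X) t = gaussian_char \<mu> v t"
  shows "gaussian_rv M X"
proof -
  have distr_X: "real_distribution (distr M borel X)"
    by (simp add: X prob_space_distr real_distribution_def real_distribution_axioms_def)
  show ?thesis
  proof (cases "v = 0")
    case True
    have "real_distribution (return borel \<mu>)"
      by (simp add: prob_space_return real_distribution_def real_distribution_axioms_def)
    then have distr_return: "distr M borel X = return borel \<mu>"
      by (rule Levy_uniqueness[OF distr_X]) (simp add: fun_eq_iff char True char_return)
    have "AE x in distr M borel X. x = \<mu>"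
      unfolding distr_return by (simp add: AE_return)
    then have "AE \<omega> in M. X \<omega> = \<mu>"
      by (subst (asm) AE_distr_iff) (use X in auto)
    then show ?thesis
      unfolding gaussian_rv_def using X by auto
  next
    case False
    then have \<sigma>: "sqrt v > 0"
      using \<open>v \<ge> 0\<close> by simp
    have "real_distribution (density lborel (normal_density \<mu> (sqrt v)))"
      using prob_space_normal_density[OF \<sigma>]
      by (auto simp: real_distribution_def real_distribution_axioms_def)
    then have "distr M borel X = density lborel (normal_density \<mu> (sqrt v))"
      by (rule Levy_uniqueness[OF distr_X])
        (simp add: fun_eq_iff char char_normal_density[OF \<sigma>] \<open>v \<ge> 0\<close>)
    then have "distributed M lborel X (normal_density \<mu> (sqrt v))"
      unfolding distributed_def using X by (simp cong: distr_cong)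
    then show ?thesis
      unfolding gaussian_rv_def using X \<sigma> by blast
  qed
qed

lemma gaussian_rv_add_indep:
  assumes X: "gaussian_rv M X" and Y: "gaussian_rv M Y"
    and indep: "indep_var borel X borel Y"
  shows "gaussian_rv M (\<lambda>\<omega>. X \<omega> + Y \<omega>)"
proof (rule gaussian_rv_if_char)
  have [measurable]: "X \<in> borel_measurable M" "Y \<in> borel_measurable M"
    using X Y by (auto intro: gaussian_rv_measurable)
  show "(\<lambda>\<omega>. X \<omega> + Y \<omega>) \<in> borel_measurable M"
    by measurable
  show "0 \<le> variance X + variance Y"
    by (simp add: add_nonneg_nonneg)
  fix t
  show "char (distr M borel (\<lambda>\<omega>. X \<omega> + Y \<omega>)) t =
      gaussian_char (expectation X + expectation Y) (variance X + variance Y) t"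
    using char_distr_add[OF indep] gaussian_rv_char(3)[OF X] gaussian_rv_char(3)[OF Y]
    by (simp add: gaussian_char_add)
qed

end

section \<open>Convergence in mean square\<close>

definition square_integrable :: "'a measure \<Rightarrow> ('a \<Rightarrow> real) \<Rightarrow> bool" where
  "square_integrable M f \<longleftrightarrow> f \<in> borel_measurable M \<and> integrable M (\<lambda>x. (f x)\<^sup>2)"

lemma square_integrable_mult:
  assumes "square_integrable M f" "square_integrable M g"
  shows "integrable M (\<lambda>x. f x * g x)"
proof (rule Bochner_Integration.integrable_bound)
  show "integrable M (\<lambda>x. (f x)\<^sup>2 + (g x)\<^sup>2)"
    using assms by (simp add: square_integrable_def)
  show "(\<lambda>x. f x * g x) \<in> borel_measurable M"
    using assms by (simp add: square_integrable_def borel_measurable_times)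
  have "2 * \<bar>f x * g x\<bar> \<le> (f x)\<^sup>2 + (g x)\<^sup>2" for x
    using sum_squares_bound[of "\<bar>f x\<bar>" "\<bar>g x\<bar>"] by (simp add: abs_mult mult.assoc)
  then have "\<bar>f x * g x\<bar> \<le> (f x)\<^sup>2 + (g x)\<^sup>2" for x
    by (smt (verit) abs_ge_zero)
  then show "AE x in M. norm (f x * g x) \<le> norm ((f x)\<^sup>2 + (g x)\<^sup>2)"
    by simp
qed

lemma square_integrable_add:
  assumes "square_integrable M f" "square_integrable M g"
  shows "square_integrable M (\<lambda>x. f x + g x)"
proof -
  have "integrable M (\<lambda>x. (f x)\<^sup>2 + (g x)\<^sup>2 + 2 * (f x * g x))"
    using square_integrable_mult[OF assms] assms by (simp add: square_integrable_def)
  then show ?thesis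
    using assms unfolding square_integrable_def by (simp add: power2_sum algebra_simps borel_measurable_add)
qed

lemma square_integrable_cmult: "square_integrable M f \<Longrightarrow> square_integrable M (\<lambda>x. c * f x)"
  unfolding square_integrable_def by (simp add: power_mult_distrib borel_measurable_times)

lemma square_integrable_diff:
  "square_integrable M f \<Longrightarrow> square_integrable M g \<Longrightarrow> square_integrable M (\<lambda>x. f x - g x)"
  using square_integrable_add[of M f "\<lambda>x. (-1) * g x"] square_integrable_cmult[of M g "-1"] by simp

lemma (in finite_measure) square_integrable_const: "square_integrable M (\<lambda>x. c)"
  by (simp add: square_integrable_def)

lemma (in finite_measure) square_integrable_integrable: "square_integrable M f \<Longrightarrow> integrable M f"
  by (simp add: square_integrable_def square_integrable_imp_integrable)

lemma nonneg_quadratic_discriminant: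
  fixes A B C :: real
  assumes quadratic: "\<And>l. 0 \<le> l\<^sup>2 * A - 2 * l * C + B" and "A \<ge> 0"
  shows "C\<^sup>2 \<le> A * B"
proof (cases "A = 0")
  case True
  have "C = 0"
  proof (rule ccontr)
    assume "C \<noteq> 0"
    then show False
      using quadratic[of "(B + 1) / (2 * C)"] True by (simp add: field_simps)
  qed
  then show ?thesis
    using True by simp
next
  case False
  then have "A > 0"
    using \<open>A \<ge> 0\<close> by simp
  then have "0 \<le> (B * A - C\<^sup>2) / A"
    using quadratic[of "C / A"] by (simp add: field_simps power2_eq_square)
  then show ?thesis
    using \<open>A > 0\<close> by (simp add: zero_le_divide_iff algebra_simps)
qed

lemma Cauchy_Schwarz_integral:
  assumes f: "square_integrable M f" and g: "square_integrable M g"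
  shows "\<bar>\<integral>x. f x * g x \<partial>M\<bar> \<le> sqrt (\<integral>x. (f x)\<^sup>2 \<partial>M) * sqrt (\<integral>x. (g x)\<^sup>2 \<partial>M)"
proof -
  define A where "A = (\<integral>x. (f x)\<^sup>2 \<partial>M)"
  define B where "B = (\<integral>x. (g x)\<^sup>2 \<partial>M)"
  define C where "C = (\<integral>x. f x * g x \<partial>M)"
  have "A \<ge> 0"
    unfolding A_def by (rule integral_nonneg_AE) simp
  have "0 \<le> l\<^sup>2 * A - 2 * l * C + B" for l
  proof -
    have "0 \<le> (\<integral>x. (l * f x - g x)\<^sup>2 \<partial>M)"
      by (rule integral_nonneg_AE) simp
    also have "(\<integral>x. (l * f x - g x)\<^sup>2 \<partial>M) = (\<integral>x. l\<^sup>2 * (f x)\<^sup>2 - 2 * l * (f x * g x) + (g x)\<^sup>2 \<partial>M)"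
      by (rule Bochner_Integration.integral_cong) (auto simp: power2_eq_square algebra_simps)
    also have "\<dots> = l\<^sup>2 * A - 2 * l * C + B"
      using f g square_integrable_mult[OF f g]
      unfolding A_def B_def C_def square_integrable_def by simp
    finally show ?thesis .
  qed
  then have "C\<^sup>2 \<le> A * B"
    using \<open>A \<ge> 0\<close> by (rule nonneg_quadratic_discriminant)
  then have "sqrt (C\<^sup>2) \<le> sqrt (A * B)"
    by (rule real_sqrt_le_mono)
  then show ?thesis
    unfolding A_def B_def C_def by (simp add: real_sqrt_mult)
qed

definition tendsto_L2 :: "'a measure \<Rightarrow> (nat \<Rightarrow> 'a \<Rightarrow> real) \<Rightarrow> ('a \<Rightarrow> real) \<Rightarrow> bool" where
  "tendsto_L2 M fs f \<longleftrightarrow> (\<forall>n. square_integrable M (fs n)) \<and> square_integrable M f \<and>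
     (\<lambda>n. \<integral>x. (fs n x - f x)\<^sup>2 \<partial>M) \<longlonglongrightarrow> 0"

lemma tendsto_L2_square_integrable: "tendsto_L2 M fs f \<Longrightarrow> square_integrable M f"
  by (simp add: tendsto_L2_def)

lemma tendsto_L2_if_nn_integral:
  assumes fs: "\<And>n. square_integrable M (fs n)" and f[measurable]: "f \<in> borel_measurable M"
    and lim: "(\<lambda>n. \<integral>\<^sup>+x. ennreal ((fs n x - f x)\<^sup>2) \<partial>M) \<longlonglongrightarrow> 0"
  shows "tendsto_L2 M fs f"
proof -
  have [measurable]: "fs n \<in> borel_measurable M" for n
    using fs by (simp add: square_integrable_def)
  have "eventually (\<lambda>n. (\<integral>\<^sup>+x. ennreal ((fs n x - f x)\<^sup>2) \<partial>M) < 1) sequentially"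
    using lim by (rule order_tendstoD) simp
  then obtain N where "(\<integral>\<^sup>+x. ennreal ((fs N x - f x)\<^sup>2) \<partial>M) < 1"
    by (auto simp: eventually_sequentially)
  then have "integrable M (\<lambda>x. (fs N x - f x)\<^sup>2)"
    by (intro integrableI_nonneg) (auto intro: order.strict_trans[of _ 1])
  then have "square_integrable M (\<lambda>x. fs N x - f x)"
    by (simp add: square_integrable_def borel_measurable_diff)
  from square_integrable_diff[OF fs[of N] this] have "square_integrable M f"
    by simp
  moreover have "(\<integral>x. (fs n x - f x)\<^sup>2 \<partial>M) = enn2real (\<integral>\<^sup>+x. ennreal ((fs n x - f x)\<^sup>2) \<partial>M)" for n
    by (rule integral_eq_nn_integral) auto
  moreover have "(\<lambda>n. enn2real (\<integral>\<^sup>+x. ennreal ((fs n x - f x)\<^sup>2) \<partial>M)) \<longlonglongrightarrow> 0"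
    using tendsto_enn2real[of _ 0] lim by simp
  ultimately show ?thesis
    unfolding tendsto_L2_def using fs by simp
qed

lemma tendsto_L2_integral_mult:
  assumes F: "tendsto_L2 M fs f" and G: "tendsto_L2 M gs g"
  shows "(\<lambda>n. \<integral>x. fs n x * gs n x \<partial>M) \<longlonglongrightarrow> (\<integral>x. f x * g x \<partial>M)"
proof -
  have f: "square_integrable M f" and g: "square_integrable M g"
    and d: "\<And>n. square_integrable M (\<lambda>x. fs n x - f x)"
    and e: "\<And>n. square_integrable M (\<lambda>x. gs n x - g x)"
    using F G by (auto simp: tendsto_L2_def intro: square_integrable_diff)
  define D where "D n = (\<integral>x. (fs n x - f x)\<^sup>2 \<partial>M)" for n
  define E where "E n = (\<integral>x. (gs n x - g x)\<^sup>2 \<partial>M)" for n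
  \<comment> \<open>expand \<open>fs n * gs n\<close> around \<open>f * g\<close> and bound each error term by Cauchy--Schwarz\<close>
  have "\<bar>(\<integral>x. fs n x * gs n x \<partial>M) - (\<integral>x. f x * g x \<partial>M)\<bar> =
      \<bar>(\<integral>x. (fs n x - f x) * (gs n x - g x) \<partial>M) + (\<integral>x. (fs n x - f x) * g x \<partial>M)
        + (\<integral>x. f x * (gs n x - g x) \<partial>M)\<bar>" for n
  proof -
    have "(\<integral>x. fs n x * gs n x \<partial>M) = (\<integral>x. (fs n x - f x) * (gs n x - g x)
        + (fs n x - f x) * g x + f x * (gs n x - g x) + f x * g x \<partial>M)"
      by (rule Bochner_Integration.integral_cong) (auto simp: algebra_simps)
    then show ?thesis
      using square_integrable_mult[OF d e] square_integrable_mult[OF d g]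
        square_integrable_mult[OF f e] square_integrable_mult[OF f g] by simp
  qed
  also have "\<dots> n \<le> sqrt (D n) * sqrt (E n) + sqrt (D n) * sqrt (\<integral>x. (g x)\<^sup>2 \<partial>M)
      + sqrt (\<integral>x. (f x)\<^sup>2 \<partial>M) * sqrt (E n)" for n
    unfolding D_def E_def
    by (intro order_trans[OF abs_triangle_ineq] add_mono Cauchy_Schwarz_integral d e f g)
  finally have bound: "norm ((\<integral>x. fs n x * gs n x \<partial>M) - (\<integral>x. f x * g x \<partial>M)) \<le>
      sqrt (D n) * sqrt (E n) + sqrt (D n) * sqrt (\<integral>x. (g x)\<^sup>2 \<partial>M)
      + sqrt (\<integral>x. (f x)\<^sup>2 \<partial>M) * sqrt (E n)" for n
    by simp
  have "D \<longlonglongrightarrow> 0" "E \<longlonglongrightarrow> 0"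
    using F G unfolding D_def E_def tendsto_L2_def by auto
  then have "(\<lambda>n. sqrt (D n) * sqrt (E n) + sqrt (D n) * sqrt (\<integral>x. (g x)\<^sup>2 \<partial>M)
      + sqrt (\<integral>x. (f x)\<^sup>2 \<partial>M) * sqrt (E n)) \<longlonglongrightarrow> 0"
    by (auto intro!: tendsto_eq_intros)
  then have "(\<lambda>n. (\<integral>x. fs n x * gs n x \<partial>M) - (\<integral>x. f x * g x \<partial>M)) \<longlonglongrightarrow> 0"
    by (rule Lim_null_comparison[OF always_eventually[OF allI[OF bound]]])
  then show ?thesis
    by (simp add: LIM_zero_iff)
qed

lemma tendsto_L2_const: "square_integrable M f \<Longrightarrow> tendsto_L2 M (\<lambda>n. f) f"
  unfolding tendsto_L2_def by simp

lemma tendsto_L2_add: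
  assumes F: "tendsto_L2 M fs f" and G: "tendsto_L2 M gs g"
  shows "tendsto_L2 M (\<lambda>n x. fs n x + gs n x) (\<lambda>x. f x + g x)"
proof -
  have d: "\<And>n. square_integrable M (\<lambda>x. fs n x - f x)"
    and e: "\<And>n. square_integrable M (\<lambda>x. gs n x - g x)"
    using F G by (auto simp: tendsto_L2_def intro: square_integrable_diff)
  have bound: "norm (\<integral>x. (fs n x + gs n x - (f x + g x))\<^sup>2 \<partial>M) \<le>
     2 * (\<integral>x. (fs n x - f x)\<^sup>2 \<partial>M) + 2 * (\<integral>x. (gs n x - g x)\<^sup>2 \<partial>M)" for n
  proof -
    have "0 \<le> (\<integral>x. (fs n x + gs n x - (f x + g x))\<^sup>2 \<partial>M)"
      by (rule integral_nonneg_AE) simp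
    moreover have "(\<integral>x. (fs n x + gs n x - (f x + g x))\<^sup>2 \<partial>M) \<le>
        (\<integral>x. 2 * (fs n x - f x)\<^sup>2 + 2 * (gs n x - g x)\<^sup>2 \<partial>M)"
    proof (rule integral_mono)
      show "integrable M (\<lambda>x. (fs n x + gs n x - (f x + g x))\<^sup>2)"
        using square_integrable_add[OF d e, of n] by (simp add: square_integrable_def algebra_simps)
      show "integrable M (\<lambda>x. 2 * (fs n x - f x)\<^sup>2 + 2 * (gs n x - g x)\<^sup>2)"
        using d e by (simp add: square_integrable_def)
      show "(fs n x + gs n x - (f x + g x))\<^sup>2 \<le> 2 * (fs n x - f x)\<^sup>2 + 2 * (gs n x - g x)\<^sup>2" for x
        using sum_squares_bound[of "fs n x - f x" "gs n x - g x"]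
        by (simp add: power2_eq_square algebra_simps)
    qed
    ultimately show ?thesis
      using d e by (simp add: square_integrable_def)
  qed
  have "(\<lambda>n. 2 * (\<integral>x. (fs n x - f x)\<^sup>2 \<partial>M) + 2 * (\<integral>x. (gs n x - g x)\<^sup>2 \<partial>M)) \<longlonglongrightarrow> 0"
    using F G unfolding tendsto_L2_def by (auto intro!: tendsto_eq_intros)
  then have "(\<lambda>n. \<integral>x. (fs n x + gs n x - (f x + g x))\<^sup>2 \<partial>M) \<longlonglongrightarrow> 0"
    by (rule Lim_null_comparison[OF always_eventually[OF allI[OF bound]]])
  then show ?thesis
    using F G unfolding tendsto_L2_def by (auto intro: square_integrable_add)
qed

lemma tendsto_L2_cmult:
  assumes F: "tendsto_L2 M fs f"
  shows "tendsto_L2 M (\<lambda>n x. c * fs n x) (\<lambda>x. c * f x)"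
proof -
  have "(\<integral>x. (c * fs n x - c * f x)\<^sup>2 \<partial>M) = c\<^sup>2 * (\<integral>x. (fs n x - f x)\<^sup>2 \<partial>M)" for n
    by (simp add: right_diff_distrib[symmetric] power_mult_distrib)
  moreover have "(\<lambda>n. c\<^sup>2 * (\<integral>x. (fs n x - f x)\<^sup>2 \<partial>M)) \<longlonglongrightarrow> c\<^sup>2 * 0"
    using F unfolding tendsto_L2_def by (intro tendsto_intros) auto
  ultimately show ?thesis
    using F unfolding tendsto_L2_def by (auto intro: square_integrable_cmult)
qed

lemma tendsto_L2_sum:
  "(\<And>i. i \<in> I \<Longrightarrow> tendsto_L2 M (fs i) (f i)) \<Longrightarrow>
    tendsto_L2 M (\<lambda>n x. \<Sum>i\<in>I. fs i n x) (\<lambda>x. \<Sum>i\<in>I. f i x)"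
  by (induct I rule: infinite_finite_induct)
    (auto intro: tendsto_L2_add tendsto_L2_const simp: square_integrable_def)

lemma iexp_lipschitz: "norm (iexp a - iexp b) \<le> \<bar>a - b\<bar>"
proof -
  have "iexp a - iexp b = iexp b * (iexp (a - b) - 1)"
    by (simp add: algebra_simps exp_diff[symmetric] exp_add[symmetric] flip: exp_of_real)
  then have "norm (iexp a - iexp b) = norm (iexp (a - b) - 1)"
    by (simp add: norm_mult)
  also have "\<dots> \<le> \<bar>a - b\<bar>"
    using iexp_approx1[of "a - b" 0] by simp
  finally show ?thesis .
qed

context prob_space
begin

lemma tendsto_L2_moments:
  assumes L: "tendsto_L2 M X Y"
  shows "(\<lambda>n. expectation (X n)) \<longlonglongrightarrow> expectation Y"
    and "(\<lambda>n. variance (X n)) \<longlonglongrightarrow> variance Y"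
proof -
  have one: "tendsto_L2 M (\<lambda>n x. 1) (\<lambda>x. 1)"
    by (intro tendsto_L2_const square_integrable_const)
  show mean: "(\<lambda>n. expectation (X n)) \<longlonglongrightarrow> expectation Y"
    using tendsto_L2_integral_mult[OF L one] by simp
  have "(\<lambda>n. expectation (\<lambda>x. (X n x)\<^sup>2) - (expectation (X n))\<^sup>2) \<longlonglongrightarrow>
      expectation (\<lambda>x. (Y x)\<^sup>2) - (expectation Y)\<^sup>2"
    using tendsto_L2_integral_mult[OF L L] mean by (auto intro!: tendsto_intros simp: power2_eq_square)
  moreover have "variance Z = expectation (\<lambda>x. (Z x)\<^sup>2) - (expectation Z)\<^sup>2"
    if "square_integrable M Z" for Z
    using that by (intro variance_eq) (simp_all add: square_integrable_integrable square_integrable_def)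
  ultimately show "(\<lambda>n. variance (X n)) \<longlonglongrightarrow> variance Y"
    using L unfolding tendsto_L2_def by simp
qed

lemma tendsto_L2_char:
  assumes L: "tendsto_L2 M X Y"
  shows "(\<lambda>n. char (distr M borel (X n)) t) \<longlonglongrightarrow> char (distr M borel Y) t"
proof -
  have [measurable]: "Y \<in> borel_measurable M" "X n \<in> borel_measurable M" for n
    using L by (auto simp: tendsto_L2_def square_integrable_def)
  have d: "square_integrable M (\<lambda>x. \<bar>X n x - Y x\<bar>)" for n
    using L square_integrable_diff[of M "X n" Y] by (simp add: tendsto_L2_def square_integrable_def)
  have bound: "norm (char (distr M borel (X n)) t - char (distr M borel Y) t) \<le>
      \<bar>t\<bar> * sqrt (expectation (\<lambda>x. (X n x - Y x)\<^sup>2))" for n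
  proof -
    have "char (distr M borel (X n)) t - char (distr M borel Y) t =
        (CLINT \<omega>|M. iexp (t * X n \<omega>) - iexp (t * Y \<omega>))"
      unfolding char_def by (simp add: integral_distr integrable_iexp)
    also have "norm \<dots> \<le> expectation (\<lambda>\<omega>. norm (iexp (t * X n \<omega>) - iexp (t * Y \<omega>)))"
      by (rule integral_norm_bound)
    also have "\<dots> \<le> expectation (\<lambda>\<omega>. \<bar>t\<bar> * \<bar>X n \<omega> - Y \<omega>\<bar>)"
    proof (rule integral_mono)
      show "integrable M (\<lambda>\<omega>. norm (iexp (t * X n \<omega>) - iexp (t * Y \<omega>)))"
        by (intro integrable_norm Bochner_Integration.integrable_diff integrable_iexp) auto
      show "integrable M (\<lambda>\<omega>. \<bar>t\<bar> * \<bar>X n \<omega> - Y \<omega>\<bar>)"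
        using square_integrable_integrable[OF d] by simp
      show "norm (iexp (t * X n \<omega>) - iexp (t * Y \<omega>)) \<le> \<bar>t\<bar> * \<bar>X n \<omega> - Y \<omega>\<bar>" for \<omega>
        using iexp_lipschitz[of "t * X n \<omega>" "t * Y \<omega>"] by (simp add: abs_mult right_diff_distrib[symmetric])
    qed
    also have "\<dots> = \<bar>t\<bar> * expectation (\<lambda>\<omega>. \<bar>X n \<omega> - Y \<omega>\<bar> * 1)"
      by simp
    also have "\<dots> \<le> \<bar>t\<bar> * sqrt (expectation (\<lambda>x. (X n x - Y x)\<^sup>2))"
      using Cauchy_Schwarz_integral[OF d square_integrable_const[of 1]]
      by (intro mult_left_mono) (simp_all add: prob_space)
    finally show ?thesis .
  qed
  have "(\<lambda>n. \<bar>t\<bar> * sqrt (expectation (\<lambda>x. (X n x - Y x)\<^sup>2))) \<longlonglongrightarrow> \<bar>t\<bar> * sqrt 0"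
    using L unfolding tendsto_L2_def by (intro tendsto_intros) auto
  then have "(\<lambda>n. char (distr M borel (X n)) t - char (distr M borel Y) t) \<longlonglongrightarrow> 0"
    by (simp add: Lim_null_comparison[OF always_eventually[OF allI[OF bound]]])
  then show ?thesis
    by (simp add: LIM_zero_iff)
qed

lemma gaussian_rv_L2_limit:
  assumes G: "\<And>n. gaussian_rv M (X n)" and L: "tendsto_L2 M X Y"
  shows "gaussian_rv M Y"
proof (rule gaussian_rv_if_char)
  show "Y \<in> borel_measurable M"
    using L by (simp add: tendsto_L2_def square_integrable_def)
  show "variance Y \<ge> 0"
    by (rule integral_nonneg_AE) simp
  fix t
  have "(\<lambda>n. char (distr M borel (X n)) t) \<longlonglongrightarrow> gaussian_char (expectation Y) (variance Y) t"
    unfolding gaussian_rv_char(3)[OF G] gaussian_char_def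
    using tendsto_L2_moments[OF L] by (intro tendsto_intros) auto
  with tendsto_L2_char[OF L]
  show "char (distr M borel Y) t = gaussian_char (expectation Y) (variance Y) t"
    by (rule LIMSEQ_unique)
qed

end

section \<open>Linear spans of Gaussian families\<close>

definition process_span :: "'i set \<Rightarrow> ('i \<Rightarrow> 'a \<Rightarrow> real) \<Rightarrow> ('a \<Rightarrow> real) set" where
  "process_span I X = {Z. \<exists>J c. finite J \<and> J \<subseteq> I \<and> (\<forall>\<omega>. Z \<omega> = (\<Sum>j\<in>J. c j * X j \<omega>))}"

lemma process_span_zero: "(\<lambda>\<omega>. 0) \<in> process_span I X"
  unfolding process_span_def by (rule CollectI, rule exI[of _ "{}"]) auto

lemma process_span_coordinate: "i \<in> I \<Longrightarrow> X i \<in> process_span I X"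
  unfolding process_span_def by (rule CollectI, rule exI[of _ "{i}"], rule exI[of _ "\<lambda>_. 1"]) auto

lemma process_span_cmult:
  assumes "Z \<in> process_span I X"
  shows "(\<lambda>\<omega>. a * Z \<omega>) \<in> process_span I X"
proof -
  obtain J c where "finite J" "J \<subseteq> I" "\<And>\<omega>. Z \<omega> = (\<Sum>j\<in>J. c j * X j \<omega>)"
    using assms unfolding process_span_def by blast
  then show ?thesis
    unfolding process_span_def
    by (intro CollectI exI[of _ J] exI[of _ "\<lambda>j. a * c j"]) (simp add: sum_distrib_left mult.assoc)
qed

lemma process_span_add:
  assumes "Z \<in> process_span I X" "Z' \<in> process_span I X"
  shows "(\<lambda>\<omega>. Z \<omega> + Z' \<omega>) \<in> process_span I X"
proof -
  obtain J c J' c' where J: "finite J" "J \<subseteq> I" "\<And>\<omega>. Z \<omega> = (\<Sum>j\<in>J. c j * X j \<omega>)"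
    and J': "finite J'" "J' \<subseteq> I" "\<And>\<omega>. Z' \<omega> = (\<Sum>j\<in>J'. c' j * X j \<omega>)"
    using assms unfolding process_span_def by blast
  have extend: "(\<Sum>j\<in>K. c j * X j \<omega>) = (\<Sum>j\<in>J \<union> J'. (if j \<in> K then c j else 0) * X j \<omega>)"
    if "K \<subseteq> J \<union> J'" for K c \<omega>
  proof -
    have "(\<Sum>j\<in>J \<union> J'. (if j \<in> K then c j else 0) * X j \<omega>) =
        (\<Sum>j\<in>J \<union> J'. if j \<in> K then c j * X j \<omega> else 0)"
      by (rule sum.cong) auto
    then show ?thesis
      using that J J' sum.inter_restrict[of "J \<union> J'" "\<lambda>j. c j * X j \<omega>" K]
      by (simp add: Int_absorb1)
  qed
  have "Z \<omega> + Z' \<omega> =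
      (\<Sum>j\<in>J \<union> J'. ((if j \<in> J then c j else 0) + (if j \<in> J' then c' j else 0)) * X j \<omega>)" for \<omega>
    unfolding J(3) J'(3) extend[OF Un_upper1] extend[OF Un_upper2]
    by (simp add: sum.distrib distrib_right)
  then show ?thesis
    unfolding process_span_def using J J' by (intro CollectI exI[of _ "J \<union> J'"] exI) auto
qed

lemma process_span_diff:
  "Z \<in> process_span I X \<Longrightarrow> Z' \<in> process_span I X \<Longrightarrow> (\<lambda>\<omega>. Z \<omega> - Z' \<omega>) \<in> process_span I X"
  using process_span_add[of Z I X "\<lambda>\<omega>. (-1) * Z' \<omega>"] process_span_cmult[of Z' I X "-1"] by simp

lemma process_span_sum:
  "(\<And>j. j \<in> J \<Longrightarrow> Z j \<in> process_span I X) \<Longrightarrow> (\<lambda>\<omega>. \<Sum>j\<in>J. Z j \<omega>) \<in> process_span I X"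
  by (induct J rule: infinite_finite_induct) (auto intro: process_span_add process_span_zero)

lemma gaussian_rv_process_span:
  assumes "jointly_gaussian M I X" "Z \<in> process_span I X"
  shows "gaussian_rv M Z"
proof -
  obtain J c where "finite J" "J \<subseteq> I" "Z = (\<lambda>\<omega>. \<Sum>j\<in>J. c j * X j \<omega>)"
    using assms(2) unfolding process_span_def by blast
  then show ?thesis
    using assms(1) unfolding jointly_gaussian_def by blast
qed

lemma process_span_factor:
  assumes "Z \<in> process_span I X"
  shows "\<exists>g\<in>borel_measurable (Pi\<^sub>M I (\<lambda>_. borel)). \<forall>\<omega>. Z \<omega> = g (\<lambda>i\<in>I. X i \<omega>)"
proof -
  obtain J c where J: "finite J" "J \<subseteq> I" "\<And>\<omega>. Z \<omega> = (\<Sum>j\<in>J. c j * X j \<omega>)"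
    using assms unfolding process_span_def by blast
  have "(\<lambda>h. \<Sum>j\<in>J. c j * h j) \<in> borel_measurable (Pi\<^sub>M I (\<lambda>_. borel))"
    using J by (intro borel_measurable_sum borel_measurable_times measurable_const
        measurable_component_singleton) auto
  moreover have "Z \<omega> = (\<Sum>j\<in>J. c j * (\<lambda>i\<in>I. X i \<omega>) j)" for \<omega>
    using J by (auto intro!: sum.cong)
  ultimately show ?thesis
    by (intro bexI[of _ "\<lambda>h. \<Sum>j\<in>J. c j * h j"]) auto
qed

definition L2_span :: "'a measure \<Rightarrow> 'i set \<Rightarrow> ('i \<Rightarrow> 'a \<Rightarrow> real) \<Rightarrow> ('a \<Rightarrow> real) set" where
  "L2_span M I X = {Y. \<exists>Z. (\<forall>n. Z n \<in> process_span I X) \<and> tendsto_L2 M Z Y}"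

lemma L2_span_lincomb:
  assumes "\<And>j. j \<in> J \<Longrightarrow> Y j \<in> L2_span M I X"
  shows "(\<lambda>\<omega>. \<Sum>j\<in>J. a j * Y j \<omega>) \<in> L2_span M I X"
proof -
  have "\<forall>j\<in>J. \<exists>Z. (\<forall>n. Z n \<in> process_span I X) \<and> tendsto_L2 M Z (Y j)"
    using assms unfolding L2_span_def by blast
  then obtain Z where Z: "\<And>j n. j \<in> J \<Longrightarrow> Z j n \<in> process_span I X"
    "\<And>j. j \<in> J \<Longrightarrow> tendsto_L2 M (Z j) (Y j)"
    using bchoice by metis
  have "tendsto_L2 M (\<lambda>n \<omega>. \<Sum>j\<in>J. a j * Z j n \<omega>) (\<lambda>\<omega>. \<Sum>j\<in>J. a j * Y j \<omega>)"
    by (intro tendsto_L2_sum tendsto_L2_cmult Z(2))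
  moreover have "(\<lambda>\<omega>. \<Sum>j\<in>J. a j * Z j n \<omega>) \<in> process_span I X" for n
    using Z(1) by (intro process_span_sum process_span_cmult)
  ultimately show ?thesis
    unfolding L2_span_def by (intro CollectI exI[of _ "\<lambda>n \<omega>. \<Sum>j\<in>J. a j * Z j n \<omega>"]) auto
qed

context prob_space
begin

lemma square_integrable_gaussian_rv: "gaussian_rv M X \<Longrightarrow> square_integrable M X"
  using gaussian_rv_char(2) unfolding square_integrable_def gaussian_rv_def by blast

lemma expectation_process_span:
  assumes "centered_gaussian_family M I X K" "Z \<in> process_span I X"
  shows "expectation Z = 0"
proof -
  obtain J c where J: "finite J" "J \<subseteq> I" "Z = (\<lambda>\<omega>. \<Sum>j\<in>J. c j * X j \<omega>)"
    using assms(2) unfolding process_span_def by blast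
  have "gaussian_rv M (X j)" if "j \<in> J" for j
    using assms(1) J(2) that
    by (auto simp: centered_gaussian_family_def intro: gaussian_rv_process_span process_span_coordinate)
  then show ?thesis
    using assms(1) J unfolding centered_gaussian_family_def
    by (auto simp: gaussian_rv_char(1) intro!: sum.neutral)
qed

lemma indep_var_process_span:
  assumes indep: "indep_var (Pi\<^sub>M I (\<lambda>_. borel)) (\<lambda>\<omega>. \<lambda>i\<in>I. W i \<omega>)
      (Pi\<^sub>M I (\<lambda>_. borel)) (\<lambda>\<omega>. \<lambda>i\<in>I. B i \<omega>)"
    and "U \<in> process_span I W" "V \<in> process_span I B"
  shows "indep_var borel U borel V"
proof -
  obtain f where f: "f \<in> borel_measurable (Pi\<^sub>M I (\<lambda>_. borel))" "\<And>\<omega>. U \<omega> = f (\<lambda>i\<in>I. W i \<omega>)"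
    using process_span_factor[OF assms(2)] by blast
  obtain g where g: "g \<in> borel_measurable (Pi\<^sub>M I (\<lambda>_. borel))" "\<And>\<omega>. V \<omega> = g (\<lambda>i\<in>I. B i \<omega>)"
    using process_span_factor[OF assms(3)] by blast
  have "U = f \<circ> (\<lambda>\<omega>. \<lambda>i\<in>I. W i \<omega>)" "V = g \<circ> (\<lambda>\<omega>. \<lambda>i\<in>I. B i \<omega>)"
    using f(2) g(2) by auto
  then show ?thesis
    using indep_var_compose[OF indep f(1) g(1)] by simp
qed


lemma gaussian_rv_add_indep_L2_span:
  assumes W: "jointly_gaussian M I W" and B: "jointly_gaussian M I B"
    and indep: "indep_var (Pi\<^sub>M I (\<lambda>_. borel)) (\<lambda>\<omega>. \<lambda>i\<in>I. W i \<omega>)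
      (Pi\<^sub>M I (\<lambda>_. borel)) (\<lambda>\<omega>. \<lambda>i\<in>I. B i \<omega>)"
    and U: "U \<in> process_span I W" and V: "V \<in> L2_span M I B"
  shows "gaussian_rv M (\<lambda>\<omega>. U \<omega> + V \<omega>)"
proof -
  obtain Z where Z: "\<And>n. Z n \<in> process_span I B" and lim: "tendsto_L2 M Z V"
    using V unfolding L2_span_def by blast
  have U_gaussian: "gaussian_rv M U"
    by (rule gaussian_rv_process_span[OF W U])
  show ?thesis
  proof (rule gaussian_rv_L2_limit)
    show "gaussian_rv M (\<lambda>\<omega>. U \<omega> + Z n \<omega>)" for n
      using gaussian_rv_process_span[OF B Z] indep_var_process_span[OF indep U Z]
      by (intro gaussian_rv_add_indep U_gaussian)
    show "tendsto_L2 M (\<lambda>n \<omega>. U \<omega> + Z n \<omega>) (\<lambda>\<omega>. U \<omega> + V \<omega>)"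
      using U_gaussian lim by (intro tendsto_L2_add tendsto_L2_const square_integrable_gaussian_rv)
  qed
qed

lemma expectation_mult_indep_L2_span:
  assumes W: "jointly_gaussian M I W" and B: "jointly_gaussian M I B"
    and indep: "indep_var (Pi\<^sub>M I (\<lambda>_. borel)) (\<lambda>\<omega>. \<lambda>i\<in>I. W i \<omega>)
      (Pi\<^sub>M I (\<lambda>_. borel)) (\<lambda>\<omega>. \<lambda>i\<in>I. B i \<omega>)"
    and U: "U \<in> process_span I W" and V: "V \<in> L2_span M I B"
  shows "expectation (\<lambda>\<omega>. U \<omega> * V \<omega>) = expectation U * expectation V"
proof -
  obtain Z where Z: "\<And>n. Z n \<in> process_span I B" and lim: "tendsto_L2 M Z V"
    using V unfolding L2_span_def by blast
  have U_sq: "square_integrable M U"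
    by (rule square_integrable_gaussian_rv[OF gaussian_rv_process_span[OF W U]])
  have "expectation (\<lambda>\<omega>. U \<omega> * Z n \<omega>) = expectation U * expectation (Z n)" for n
    using square_integrable_gaussian_rv[OF gaussian_rv_process_span[OF B Z]] U_sq
    by (intro indep_var_lebesgue_integral indep_var_process_span[OF indep U Z])
      (auto intro: square_integrable_integrable)
  moreover have "(\<lambda>n. expectation (\<lambda>\<omega>. U \<omega> * Z n \<omega>)) \<longlonglongrightarrow> expectation (\<lambda>\<omega>. U \<omega> * V \<omega>)"
    by (rule tendsto_L2_integral_mult[OF tendsto_L2_const[OF U_sq] lim])
  moreover have "(\<lambda>n. expectation U * expectation (Z n)) \<longlonglongrightarrow> expectation U * expectation V"
    by (intro tendsto_mult_left tendsto_L2_moments(1)[OF lim])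
  ultimately show ?thesis
    using LIMSEQ_unique by simp
qed

lemma centered_gaussian_family_add_indep:
  assumes W: "centered_gaussian_family M I W KW" and B: "jointly_gaussian M I B"
    and indep: "indep_var (Pi\<^sub>M I (\<lambda>_. borel)) (\<lambda>\<omega>. \<lambda>i\<in>I. W i \<omega>)
      (Pi\<^sub>M I (\<lambda>_. borel)) (\<lambda>\<omega>. \<lambda>i\<in>I. B i \<omega>)"
    and Y: "\<And>i. i \<in> I \<Longrightarrow> Y i \<in> L2_span M I B"
    and Y_mean: "\<And>i. i \<in> I \<Longrightarrow> expectation (Y i) = 0"
    and Y_cov: "\<And>i j. i \<in> I \<Longrightarrow> j \<in> I \<Longrightarrow> expectation (\<lambda>\<omega>. Y i \<omega> * Y j \<omega>) = KY i j"
  shows "centered_gaussian_family M I (\<lambda>i \<omega>. W i \<omega> + Y i \<omega>) (\<lambda>i j. KW i j + KY i j)"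
proof -
  have JW: "jointly_gaussian M I W" and W_mean: "\<And>i. i \<in> I \<Longrightarrow> expectation (W i) = 0"
    and W_cov: "\<And>i j. i \<in> I \<Longrightarrow> j \<in> I \<Longrightarrow> expectation (\<lambda>\<omega>. W i \<omega> * W j \<omega>) = KW i j"
    using W by (auto simp: centered_gaussian_family_def)
  have W_sq: "square_integrable M (W i)" if "i \<in> I" for i
    using that by (intro square_integrable_gaussian_rv gaussian_rv_process_span[OF JW]
        process_span_coordinate)
  have Y_sq: "square_integrable M (Y i)" if "i \<in> I" for i
    using Y[OF that] unfolding L2_span_def by (auto dest: tendsto_L2_square_integrable)
  have cross: "expectation (\<lambda>\<omega>. W i \<omega> * Y j \<omega>) = 0" if "i \<in> I" "j \<in> I" for i j
    using expectation_mult_indep_L2_span[OF JW B indep process_span_coordinate Y] W_mean that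
    by simp
  have "jointly_gaussian M I (\<lambda>i \<omega>. W i \<omega> + Y i \<omega>)"
    unfolding jointly_gaussian_def
  proof (intro allI impI)
    fix J a assume J: "J \<subseteq> I" "finite J"
    have "gaussian_rv M (\<lambda>\<omega>. (\<Sum>j\<in>J. a j * W j \<omega>) + (\<Sum>j\<in>J. a j * Y j \<omega>))"
      using J by (intro gaussian_rv_add_indep_L2_span[OF JW B indep] L2_span_lincomb Y
          process_span_sum process_span_cmult process_span_coordinate) auto
    then show "gaussian_rv M (\<lambda>\<omega>. \<Sum>j\<in>J. a j * (W j \<omega> + Y j \<omega>))"
      by (simp add: distrib_left sum.distrib)
  qed
  moreover have "expectation (\<lambda>\<omega>. W i \<omega> + Y i \<omega>) = 0" if "i \<in> I" for i
    using that W_mean Y_mean W_sq Y_sq by (simp add: square_integrable_integrable)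
  moreover have "expectation (\<lambda>\<omega>. (W i \<omega> + Y i \<omega>) * (W j \<omega> + Y j \<omega>)) = KW i j + KY i j"
    if "i \<in> I" "j \<in> I" for i j
  proof -
    have "expectation (\<lambda>\<omega>. (W i \<omega> + Y i \<omega>) * (W j \<omega> + Y j \<omega>)) =
        expectation (\<lambda>\<omega>. W i \<omega> * W j \<omega> + W i \<omega> * Y j \<omega> + W j \<omega> * Y i \<omega> + Y i \<omega> * Y j \<omega>)"
      by (rule Bochner_Integration.integral_cong) (auto simp: algebra_simps)
    then show ?thesis
      using that W_cov Y_cov cross W_sq Y_sq by (simp add: square_integrable_mult)
  qed
  ultimately show ?thesis
    unfolding centered_gaussian_family_def by blast
qed

end

lemma centered_gaussian_family_cong:
  assumes "centered_gaussian_family M I X K" "\<And>i j. i \<in> I \<Longrightarrow> j \<in> I \<Longrightarrow> K i j = K' i j"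
  shows "centered_gaussian_family M I X K'"
  using assms by (simp add: centered_gaussian_family_def)

lemma centered_gaussian_family_divide:
  assumes "centered_gaussian_family M I X K"
  shows "centered_gaussian_family M I (\<lambda>i \<omega>. X i \<omega> / c) (\<lambda>i j. K i j / c\<^sup>2)"
proof -
  have "jointly_gaussian M I (\<lambda>i \<omega>. X i \<omega> / c)"
    unfolding jointly_gaussian_def
  proof (intro allI impI)
    fix J a assume J: "J \<subseteq> I" "finite J"
    have jg: "\<forall>J a. J \<subseteq> I \<longrightarrow> finite J \<longrightarrow> gaussian_rv M (\<lambda>\<omega>. \<Sum>j\<in>J. a j * X j \<omega>)"
      using assms unfolding centered_gaussian_family_def jointly_gaussian_def by blast
    have "gaussian_rv M (\<lambda>\<omega>. \<Sum>j\<in>J. (a j / c) * X j \<omega>)"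
      using J spec[OF spec[OF jg, of J], of "\<lambda>j. a j / c"] by simp
    then show "gaussian_rv M (\<lambda>\<omega>. \<Sum>j\<in>J. a j * (X j \<omega> / c))"
      by simp
  qed
  then show ?thesis
    using assms unfolding centered_gaussian_family_def by (simp add: power2_eq_square)
qed

section \<open>Wiener integrals against Brownian motion\<close>

definition steps_in :: "real \<Rightarrow> (real \<times> real \<times> real) list \<Rightarrow> bool" where
  "steps_in T l \<longleftrightarrow> (\<forall>(a, s, t)\<in>set l. 0 \<le> s \<and> s \<le> t \<and> t \<le> T)"

lemma steps_in_simps [simp]:
  "steps_in T []"
  "steps_in T ((a, s, t) # l) \<longleftrightarrow> 0 \<le> s \<and> s \<le> t \<and> t \<le> T \<and> steps_in T l"
  by (simp_all add: steps_in_def)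

lemma step_fun_simps [simp]:
  "step_fun [] x = 0"
  "step_fun ((a, s, t) # l) x = a * indicator {s<..t} x + step_fun l x"
  by (simp_all add: step_fun_def)

lemma step_int_simps [simp]:
  "step_int B [] \<omega> = 0"
  "step_int B ((a, s, t) # l) \<omega> = a * (B t \<omega> - B s \<omega>) + step_int B l \<omega>"
  by (simp_all add: step_int_def)

lemma step_int_process_span: "steps_in T l \<Longrightarrow> step_int B l \<in> process_span {0..T} B"
proof (induct l)
  case Nil
  then show ?case
    using process_span_zero[of "{0..T}" B] by (simp add: fun_eq_iff)
next
  case (Cons x l)
  obtain a s t where x: "x = (a, s, t)"
    by (cases x) auto
  have "(\<lambda>\<omega>. a * (B t \<omega> - B s \<omega>) + step_int B l \<omega>) \<in> process_span {0..T} B"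
    using Cons x
    by (intro process_span_add process_span_cmult process_span_diff process_span_coordinate) auto
  then show ?case
    using x by (simp add: fun_eq_iff)
qed

lemma finite_measure_lborel_Icc: "finite_measure (restrict_space lborel {0..T::real})"
proof (rule finite_measureI)
  have "emeasure lborel {0..T} < \<infinity>"
    by (cases "0 \<le> T") auto
  then show "emeasure (restrict_space lborel {0..T}) (space (restrict_space lborel {0..T})) \<noteq> \<infinity>"
    by (subst emeasure_restrict_space) auto
qed

lemma square_integrable_lborel_Icc:
  fixes T :: real
  assumes f[measurable]: "f \<in> borel_measurable borel" and bound: "\<And>x. \<bar>f x\<bar> \<le> C"
  shows "square_integrable (restrict_space lborel {0..T}) f"
proof -
  interpret finite_measure "restrict_space lborel {0..T}"
    by (rule finite_measure_lborel_Icc)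
  have "integrable (restrict_space lborel {0..T}) (\<lambda>x. (f x)\<^sup>2)"
  proof (rule integrable_const_bound[where B="C\<^sup>2"])
    have "\<bar>f x\<bar>\<^sup>2 \<le> C\<^sup>2" for x
      using bound by (intro power_mono) auto
    then show "AE x in restrict_space lborel {0..T}. norm ((f x)\<^sup>2) \<le> C\<^sup>2"
      by simp
  qed (simp add: measurable_restrict_space1)
  then show ?thesis
    by (simp add: square_integrable_def measurable_restrict_space1)
qed

lemma square_integrable_indicator_Ioc:
  "square_integrable (restrict_space lborel {0..T::real}) (indicator {s<..t} :: real \<Rightarrow> real)"
  by (rule square_integrable_lborel_Icc[where C=1]) (auto split: split_indicator)

lemma square_integrable_step_fun: "square_integrable (restrict_space lborel {0..T::real}) (step_fun l)"
proof (induct l)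
  case Nil
  then show ?case
    by (simp add: square_integrable_def)
next
  case (Cons x l)
  obtain a s t where x: "x = (a, s, t)"
    by (cases x) auto
  have "square_integrable (restrict_space lborel {0..T}) (\<lambda>y. a * indicator {s<..t} y + step_fun l y)"
    by (intro square_integrable_add square_integrable_cmult square_integrable_indicator_Ioc Cons)
  then show ?case
    using x by (simp add: fun_eq_iff)
qed

lemma integral_indicator_Ioc_mult:
  fixes s t s' t' T :: real
  assumes "0 \<le> s" "s \<le> t" "t \<le> T" "0 \<le> s'" "s' \<le> t'" "t' \<le> T"
  shows "(\<integral>x. indicator {s<..t} x * indicator {s'<..t'} x \<partial>restrict_space lborel {0..T}) =
    min t t' - min t s' - min s t' + min s s'"
proof -
  have "(\<integral>x. indicator {s<..t} x * indicator {s'<..t'} x \<partial>restrict_space lborel {0..T}) =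
      (\<integral>x. indicator {0..T} x *\<^sub>R (indicator {s<..t} x * indicator {s'<..t'} x) \<partial>lborel :: real)"
    by (subst integral_restrict_space) auto
  also have "\<dots> = (\<integral>x. indicator {max s s'<..min t t'} x \<partial>lborel)"
    by (rule Bochner_Integration.integral_cong) (use assms in \<open>auto split: split_indicator\<close>)
  also have "\<dots> = measure lborel {max s s'<..min t t'}"
    by simp
  also have "\<dots> = min t t' - min t s' - min s t' + min s s'"
    using assms by (cases "max s s' \<le> min t t'") (auto simp: min_def max_def split: if_split_asm)
  finally show ?thesis .
qed

locale brownian_motion = prob_space P for P :: "'a measure" +
  fixes T :: real and B :: "real \<Rightarrow> 'a \<Rightarrow> real"
  assumes brownian: "brownian_motion_on P T B"
begin

lemma centered_gaussian_family: "centered_gaussian_family P {0..T} B (\<lambda>s t. min s t)"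
  using brownian by (simp add: brownian_motion_on_def)

lemma jointly_gaussian: "jointly_gaussian P {0..T} B"
  using centered_gaussian_family by (simp add: centered_gaussian_family_def)

lemma square_integrable_process_span: "Z \<in> process_span {0..T} B \<Longrightarrow> square_integrable P Z"
  by (intro square_integrable_gaussian_rv gaussian_rv_process_span[OF jointly_gaussian])

lemma expectation_increments_mult:
  assumes "0 \<le> s" "s \<le> t" "t \<le> T" "0 \<le> s'" "s' \<le> t'" "t' \<le> T"
  shows "expectation (\<lambda>\<omega>. (B t \<omega> - B s \<omega>) * (B t' \<omega> - B s' \<omega>)) =
    min t t' - min t s' - min s t' + min s s'"
proof -
  have integrable: "integrable P (\<lambda>\<omega>. B x \<omega> * B y \<omega>)" if "x \<in> {0..T}" "y \<in> {0..T}" for x y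
    using that by (intro square_integrable_mult square_integrable_process_span process_span_coordinate)
  have "expectation (\<lambda>\<omega>. (B t \<omega> - B s \<omega>) * (B t' \<omega> - B s' \<omega>)) =
      expectation (\<lambda>\<omega>. B t \<omega> * B t' \<omega> - B t \<omega> * B s' \<omega> - B s \<omega> * B t' \<omega> + B s \<omega> * B s' \<omega>)"
    by (rule Bochner_Integration.integral_cong) (auto simp: algebra_simps)
  then show ?thesis
    using assms integrable centered_gaussian_family by (simp add: centered_gaussian_family_def)
qed

lemma expectation_increment_mult_step_int:
  assumes "steps_in T l" "0 \<le> s" "s \<le> t" "t \<le> T"
  shows "expectation (\<lambda>\<omega>. (B t \<omega> - B s \<omega>) * step_int B l \<omega>) =
    (\<integral>x. indicator {s<..t} x * step_fun l x \<partial>restrict_space lborel {0..T})"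
  using assms(1)
proof (induct l)
  case (Cons x l)
  obtain a s' t' where x: "x = (a, s', t')"
    by (cases x) auto
  have steps: "0 \<le> s'" "s' \<le> t'" "t' \<le> T" "steps_in T l"
    using Cons.prems x by auto
  have sq: "square_integrable P (\<lambda>\<omega>. B t \<omega> - B s \<omega>)" "square_integrable P (\<lambda>\<omega>. B t' \<omega> - B s' \<omega>)"
    "square_integrable P (step_int B l)"
    using assms steps by (auto intro!: square_integrable_process_span process_span_diff
        process_span_coordinate step_int_process_span)
  have "expectation (\<lambda>\<omega>. (B t \<omega> - B s \<omega>) * step_int B (x # l) \<omega>) =
      expectation (\<lambda>\<omega>. a * ((B t \<omega> - B s \<omega>) * (B t' \<omega> - B s' \<omega>)) + (B t \<omega> - B s \<omega>) * step_int B l \<omega>)"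
    using x by (simp add: algebra_simps)
  also have "\<dots> = a * (\<integral>y. indicator {s<..t} y * indicator {s'<..t'} y \<partial>restrict_space lborel {0..T})
      + (\<integral>y. indicator {s<..t} y * step_fun l y \<partial>restrict_space lborel {0..T})"
    using Cons.hyps steps assms square_integrable_mult[OF sq(1,2)] square_integrable_mult[OF sq(1,3)]
    by (simp add: expectation_increments_mult integral_indicator_Ioc_mult)
  also have "\<dots> = (\<integral>y. indicator {s<..t} y * step_fun (x # l) y \<partial>restrict_space lborel {0..T})"
    using x square_integrable_mult[OF square_integrable_indicator_Ioc square_integrable_indicator_Ioc,
        of T s t s' t']
      square_integrable_mult[OF square_integrable_indicator_Ioc square_integrable_step_fun, of T s t l]
    by (simp add: algebra_simps)
  finally show ?case .
qed simp

lemma expectation_step_int_mult: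
  assumes "steps_in T l" "steps_in T l'"
  shows "expectation (\<lambda>\<omega>. step_int B l \<omega> * step_int B l' \<omega>) =
    (\<integral>x. step_fun l x * step_fun l' x \<partial>restrict_space lborel {0..T})"
  using assms(1)
proof (induct l)
  case (Cons x l)
  obtain a s t where x: "x = (a, s, t)"
    by (cases x) auto
  have steps: "0 \<le> s" "s \<le> t" "t \<le> T" "steps_in T l"
    using Cons.prems x by auto
  have sq: "square_integrable P (\<lambda>\<omega>. B t \<omega> - B s \<omega>)" "square_integrable P (step_int B l)"
    "square_integrable P (step_int B l')"
    using assms steps by (auto intro!: square_integrable_process_span process_span_diff
        process_span_coordinate step_int_process_span)
  have "expectation (\<lambda>\<omega>. step_int B (x # l) \<omega> * step_int B l' \<omega>) =
      expectation (\<lambda>\<omega>. a * ((B t \<omega> - B s \<omega>) * step_int B l' \<omega>) + step_int B l \<omega> * step_int B l' \<omega>)"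
    using x by (simp add: algebra_simps)
  also have "\<dots> = a * (\<integral>y. indicator {s<..t} y * step_fun l' y \<partial>restrict_space lborel {0..T})
      + (\<integral>y. step_fun l y * step_fun l' y \<partial>restrict_space lborel {0..T})"
    using Cons.hyps steps assms square_integrable_mult[OF sq(1,3)] square_integrable_mult[OF sq(2,3)]
    by (simp add: expectation_increment_mult_step_int)
  also have "\<dots> = (\<integral>y. step_fun (x # l) y * step_fun l' y \<partial>restrict_space lborel {0..T})"
    using x square_integrable_mult[OF square_integrable_indicator_Ioc square_integrable_step_fun,
        of T s t l']
      square_integrable_mult[OF square_integrable_step_fun square_integrable_step_fun, of T l l']
    by (simp add: algebra_simps)
  finally show ?case .
qed simp

lemma wiener_integral_step_approx:
  assumes "wiener_integral P T B g Y" and g: "g \<in> borel_measurable borel"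
  obtains l where "\<And>n. steps_in T (l n)" "tendsto_L2 P (\<lambda>n. step_int B (l n)) Y"
    "tendsto_L2 (restrict_space lborel {0..T}) (\<lambda>n. step_fun (l n)) g"
proof -
  obtain l where l: "\<And>n. steps_in T (l n)"
    and step_fun_lim: "(\<lambda>n. \<integral>\<^sup>+ x. ennreal ((step_fun (l n) x - g x)\<^sup>2) * indicator {0..T} x \<partial>lborel)
        \<longlonglongrightarrow> 0"
    and step_int_lim: "(\<lambda>n. \<integral>\<^sup>+ \<omega>. ennreal ((step_int B (l n) \<omega> - Y \<omega>)\<^sup>2) \<partial>P) \<longlonglongrightarrow> 0"
    and Y: "Y \<in> borel_measurable P"
    using assms(1) unfolding wiener_integral_def steps_in_def by blast
  have "tendsto_L2 P (\<lambda>n. step_int B (l n)) Y"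
    using l by (intro tendsto_L2_if_nn_integral[OF _ Y step_int_lim]
        square_integrable_process_span step_int_process_span)
  moreover have "tendsto_L2 (restrict_space lborel {0..T}) (\<lambda>n. step_fun (l n)) g"
    using step_fun_lim
    by (intro tendsto_L2_if_nn_integral square_integrable_step_fun)
      (simp_all add: g measurable_restrict_space1 nn_integral_restrict_space)
  ultimately show ?thesis
    by (rule that[OF l])
qed

lemma wiener_integral_L2_span:
  assumes "wiener_integral P T B g Y" "g \<in> borel_measurable borel"
  shows "Y \<in> L2_span P {0..T} B"
proof -
  obtain l where "\<And>n. steps_in T (l n)" "tendsto_L2 P (\<lambda>n. step_int B (l n)) Y"
    using wiener_integral_step_approx[OF assms] by blast
  then show ?thesis
    unfolding L2_span_def by (intro CollectI exI[of _ "\<lambda>n. step_int B (l n)"]) (simp add: step_int_process_span)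
qed

lemma wiener_integral_cov:
  assumes "wiener_integral P T B g Y" "g \<in> borel_measurable borel"
    and "wiener_integral P T B g' Y'" "g' \<in> borel_measurable borel"
  shows "expectation (\<lambda>\<omega>. Y \<omega> * Y' \<omega>) = (\<integral>x. g x * g' x \<partial>restrict_space lborel {0..T})"
proof -
  obtain l where l: "\<And>n. steps_in T (l n)" "tendsto_L2 P (\<lambda>n. step_int B (l n)) Y"
    "tendsto_L2 (restrict_space lborel {0..T}) (\<lambda>n. step_fun (l n)) g"
    using wiener_integral_step_approx[OF assms(1,2)] by blast
  obtain l' where l': "\<And>n. steps_in T (l' n)" "tendsto_L2 P (\<lambda>n. step_int B (l' n)) Y'"
    "tendsto_L2 (restrict_space lborel {0..T}) (\<lambda>n. step_fun (l' n)) g'"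
    using wiener_integral_step_approx[OF assms(3,4)] by blast
  have "(\<lambda>n. expectation (\<lambda>\<omega>. step_int B (l n) \<omega> * step_int B (l' n) \<omega>)) \<longlonglongrightarrow>
      expectation (\<lambda>\<omega>. Y \<omega> * Y' \<omega>)"
    by (rule tendsto_L2_integral_mult[OF l(2) l'(2)])
  moreover have "(\<lambda>n. expectation (\<lambda>\<omega>. step_int B (l n) \<omega> * step_int B (l' n) \<omega>)) \<longlonglongrightarrow>
      (\<integral>x. g x * g' x \<partial>restrict_space lborel {0..T})"
    using tendsto_L2_integral_mult[OF l(3) l'(3)] l(1) l'(1) by (simp add: expectation_step_int_mult)
  ultimately show ?thesis
    by (rule LIMSEQ_unique)
qed

lemma wiener_integral_mean:
  assumes "wiener_integral P T B g Y" "g \<in> borel_measurable borel"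
  shows "expectation Y = 0"
proof -
  obtain l where l: "\<And>n. steps_in T (l n)" "tendsto_L2 P (\<lambda>n. step_int B (l n)) Y"
    using wiener_integral_step_approx[OF assms] by blast
  have "(\<lambda>n. expectation (step_int B (l n))) \<longlonglongrightarrow> expectation Y"
    by (rule tendsto_L2_moments(1)[OF l(2)])
  moreover have "expectation (step_int B (l n)) = 0" for n
    by (rule expectation_process_span[OF centered_gaussian_family step_int_process_span[OF l(1)]])
  ultimately have "(\<lambda>n. 0) \<longlonglongrightarrow> expectation Y"
    by simp
  then show ?thesis
    by (simp add: LIMSEQ_const_iff)
qed

end

section \<open>Explicit integrals\<close>

lemma FTC_Ioo_nonneg:
  fixes F f :: "real \<Rightarrow> real"
  assumes "a < b" and F: "continuous_on {a..b} F"
    and F': "\<And>x. a < x \<Longrightarrow> x < b \<Longrightarrow> DERIV F x :> f x"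
    and f: "\<And>x. a < x \<Longrightarrow> x < b \<Longrightarrow> isCont f x"
    and nonneg: "\<And>x. a < x \<Longrightarrow> x < b \<Longrightarrow> 0 \<le> f x"
  shows "(\<integral>\<^sup>+x. ennreal (f x) * indicator {a<..<b} x \<partial>lborel) = ennreal (F b - F a)"
    and "(\<integral>x. indicator {a<..<b} x * f x \<partial>lborel) = F b - F a"
    and "F a \<le> F b"
proof -
  have "((F \<circ> real_of_ereal) \<longlongrightarrow> F a) (at_right (ereal a))"
    unfolding ereal_tendsto_simps1
    using F \<open>a < b\<close> by (metis atLeastAtMost_iff continuous_on_Icc_at_rightD)
  moreover have "((F \<circ> real_of_ereal) \<longlongrightarrow> F b) (at_left (ereal b))"
    unfolding ereal_tendsto_simps1
    using F \<open>a < b\<close> by (metis atLeastAtMost_iff continuous_on_Icc_at_leftD)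
  ultimately have "set_integrable lborel {a<..<b} f" "(LBINT x=ereal a..ereal b. f x) = F b - F a"
    using interval_integral_FTC_nonneg[of "ereal a" "ereal b" F f] \<open>a < b\<close> F' f nonneg by auto
  then have integrable: "integrable lborel (\<lambda>x. indicator {a<..<b} x * f x)"
    and integral: "(\<integral>x. indicator {a<..<b} x * f x \<partial>lborel) = F b - F a"
    using \<open>a < b\<close>
    by (simp_all add: set_integrable_def interval_lebesgue_integral_def set_lebesgue_integral_def)
  show "(\<integral>x. indicator {a<..<b} x * f x \<partial>lborel) = F b - F a"
    by (rule integral)
  have "(\<integral>\<^sup>+x. ennreal (f x) * indicator {a<..<b} x \<partial>lborel) =
      (\<integral>\<^sup>+x. ennreal (indicator {a<..<b} x * f x) \<partial>lborel)"
    by (rule nn_integral_cong) (simp split: split_indicator)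
  also have "\<dots> = ennreal (\<integral>x. indicator {a<..<b} x * f x \<partial>lborel)"
    using integrable nonneg by (intro nn_integral_eq_integral) (auto split: split_indicator)
  finally show "(\<integral>\<^sup>+x. ennreal (f x) * indicator {a<..<b} x \<partial>lborel) = ennreal (F b - F a)"
    by (simp add: integral)
  have "0 \<le> (\<integral>x. indicator {a<..<b} x * f x \<partial>lborel)"
    using nonneg by (intro integral_nonneg_AE) (auto split: split_indicator)
  then show "F a \<le> F b"
    by (simp add: integral)
qed

lemma integral_Icc_powr_sum:
  fixes \<beta> T m :: real
  assumes "0 < \<beta>" "\<beta> < 1" "0 \<le> m" "m \<le> T"
  shows "(\<integral>x. indicator {0..m} x * (x powr (-\<beta>) + (T - x) powr (-\<beta>)) \<partial>lborel)
     = (m powr (1-\<beta>) + T powr (1-\<beta>) - (T-m) powr (1-\<beta>)) / (1-\<beta>)"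
proof (cases "m = 0")
  case True
  have "AE x in lborel. indicator {0..m} x * (x powr (-\<beta>) + (T - x) powr (-\<beta>)) = (0::real)"
    using AE_lborel_singleton[of 0] by eventually_elim (use True in \<open>auto split: split_indicator\<close>)
  then show ?thesis
    using True by (simp add: integral_cong_AE[where g="\<lambda>_. 0"])
next
  case False
  define F where "F x = (x powr (1-\<beta>) - (T - x) powr (1-\<beta>)) / (1-\<beta>)" for x
  have "(\<integral>x. indicator {0..m} x * (x powr (-\<beta>) + (T - x) powr (-\<beta>)) \<partial>lborel) =
      (\<integral>x. indicator {0<..<m} x * (x powr (-\<beta>) + (T - x) powr (-\<beta>)) \<partial>lborel)"
    by (rule integral_cong_AE)
      (use AE_lborel_singleton[of 0] AE_lborel_singleton[of m] in \<open>auto split: split_indicator\<close>)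
  also have "\<dots> = F m - F 0"
  proof (rule FTC_Ioo_nonneg(2))
    show "continuous_on {0..m} F"
      unfolding F_def using assms by (intro continuous_intros continuous_on_powr') auto
    show "DERIV F x :> x powr (-\<beta>) + (T - x) powr (-\<beta>)" if "0 < x" "x < m" for x
    proof -
      have "DERIV F x :> ((1-\<beta>) * x powr (-\<beta>) + (1-\<beta>) * (T - x) powr (-\<beta>)) / (1-\<beta>)"
        unfolding F_def using that assms by (auto intro!: derivative_eq_intros)
      moreover have "((1-\<beta>) * x powr (-\<beta>) + (1-\<beta>) * (T - x) powr (-\<beta>)) / (1-\<beta>) =
          x powr (-\<beta>) + (T - x) powr (-\<beta>)"
        using assms by (simp flip: distrib_left)
      ultimately show ?thesis
        by (simp only:)
    qed
  qed (use False assms in \<open>auto intro!: continuous_intros\<close>)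
  also have "\<dots> = (m powr (1-\<beta>) + T powr (1-\<beta>) - (T-m) powr (1-\<beta>)) / (1-\<beta>)"
    unfolding F_def by (simp only: diff_divide_distrib[symmetric]) (simp add: algebra_simps)
  finally show ?thesis .
qed

lemma nn_integral_lborel_null_coordinates:
  fixes f :: "real \<times> real \<Rightarrow> ennreal"
  assumes f[measurable]: "f \<in> borel_measurable borel"
  shows "(\<integral>\<^sup>+z. f z \<partial>lborel) =
    (\<integral>\<^sup>+a. \<integral>\<^sup>+b. ennreal (1/2) * f ((a + b) / 2, (b - a) / 2) \<partial>lborel \<partial>lborel)"
proof -
  have "(\<integral>\<^sup>+z. f z \<partial>lborel) = (\<integral>\<^sup>+u. \<integral>\<^sup>+x. f (x, u) \<partial>lborel \<partial>lborel)"
    by (subst lborel_prod[symmetric], rule lborel_pair.nn_integral_snd[symmetric]) (simp add: lborel_prod)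
  also have "\<dots> = (\<integral>\<^sup>+u. \<integral>\<^sup>+a. f (u + a, u) \<partial>lborel \<partial>lborel)"
    using nn_integral_real_affine[of "\<lambda>x. f (x, _)" 1] by simp
  also have "\<dots> = (\<integral>\<^sup>+a. \<integral>\<^sup>+u. f (u + a, u) \<partial>lborel \<partial>lborel)"
    by (rule lborel_pair.Fubini') simp
  also have "\<dots> = (\<integral>\<^sup>+a. \<integral>\<^sup>+b. ennreal (1/2) * f ((a + b) / 2, (b - a) / 2) \<partial>lborel \<partial>lborel)"
  proof (rule nn_integral_cong)
    fix a :: real
    have "(\<integral>\<^sup>+u. f (u + a, u) \<partial>lborel) =
        ennreal (1/2) * (\<integral>\<^sup>+b. f ((-a/2 + 1/2 * b) + a, -a/2 + 1/2 * b) \<partial>lborel)"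
      using nn_integral_real_affine[of "\<lambda>u. f (u + a, u)" "1/2" "-a/2"] by simp
    also have "\<dots> = (\<integral>\<^sup>+b. ennreal (1/2) * f ((a + b) / 2, (b - a) / 2) \<partial>lborel)"
      by (subst nn_integral_cmult[symmetric]) (simp_all add: field_simps)
    finally show "(\<integral>\<^sup>+u. f (u + a, u) \<partial>lborel) = \<dots>" .
  qed
  finally show ?thesis .
qed

lemma nn_integral_powr_minus_Ioo:
  fixes \<beta> T t a :: real
  assumes "0 < \<beta>" "a < t" "t \<le> T"
  shows "(\<integral>\<^sup>+b. ennreal (2 powr \<beta> * (b - a) powr (-\<beta>-1)) * indicator {t<..<T} b \<partial>lborel)
     = ennreal ((2 powr \<beta> / \<beta>) * ((t - a) powr (-\<beta>) - (T - a) powr (-\<beta>)))"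
proof (cases "t = T")
  case False
  define G where "G b = - (2 powr \<beta> / \<beta>) * (b - a) powr (-\<beta>)" for b
  have "(\<integral>\<^sup>+b. ennreal (2 powr \<beta> * (b - a) powr (-\<beta>-1)) * indicator {t<..<T} b \<partial>lborel) = G T - G t"
  proof (rule FTC_Ioo_nonneg(1))
    show "continuous_on {t..T} G"
      unfolding G_def using assms by (intro continuous_intros) auto
    show "DERIV G b :> 2 powr \<beta> * (b - a) powr (-\<beta>-1)" if "t < b" "b < T" for b
      unfolding G_def using that assms by (auto intro!: derivative_eq_intros simp: field_simps)
  qed (use False assms in \<open>auto intro!: continuous_intros\<close>)
  also have "G T - G t = (2 powr \<beta> / \<beta>) * ((t - a) powr (-\<beta>) - (T - a) powr (-\<beta>))"
    unfolding G_def by (simp add: algebra_simps)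
  finally show ?thesis .
qed simp

lemma nn_integral_powr_diff_Ioo:
  fixes \<beta> T t s :: real
  assumes "0 < \<beta>" "\<beta> < 1" "0 \<le> s" "s \<le> t" "t \<le> T"
  shows "(\<integral>\<^sup>+a. ennreal ((2 powr \<beta> / \<beta>) * ((t - a) powr (-\<beta>) - (T - a) powr (-\<beta>))) * indicator {0<..<s} a \<partial>lborel)
     = ennreal (2 powr \<beta> / (\<beta> * (1 - \<beta>)) *
         (t powr (1-\<beta>) - (t - s) powr (1-\<beta>) - T powr (1-\<beta>) + (T - s) powr (1-\<beta>)))"
    and "0 \<le> 2 powr \<beta> / (\<beta> * (1 - \<beta>)) *
         (t powr (1-\<beta>) - (t - s) powr (1-\<beta>) - T powr (1-\<beta>) + (T - s) powr (1-\<beta>))"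
proof -
  define K where "K = 2 powr \<beta> / (\<beta> * (1 - \<beta>))"
  define H where "H a = K * ((T - a) powr (1-\<beta>) - (t - a) powr (1-\<beta>))" for a
  have H_diff: "H s - H 0 = K * (t powr (1-\<beta>) - (t - s) powr (1-\<beta>) - T powr (1-\<beta>) + (T - s) powr (1-\<beta>))"
    unfolding H_def by (simp add: algebra_simps)
  have "(\<integral>\<^sup>+a. ennreal ((2 powr \<beta> / \<beta>) * ((t - a) powr (-\<beta>) - (T - a) powr (-\<beta>))) * indicator {0<..<s} a \<partial>lborel)
      = ennreal (H s - H 0) \<and> H 0 \<le> H s"
  proof (cases "s = 0")
    case False
    then have "0 < s"
      using assms by simp
    have cont: "continuous_on {0..s} H"
      unfolding H_def using assms by (intro continuous_intros continuous_on_powr') auto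
    have deriv: "DERIV H a :> (2 powr \<beta> / \<beta>) * ((t - a) powr (-\<beta>) - (T - a) powr (-\<beta>))"
      if "0 < a" "a < s" for a
    proof -
      have "DERIV H a :> K * ((1-\<beta>) * (t - a) powr (-\<beta>) - (1-\<beta>) * (T - a) powr (-\<beta>))"
        unfolding H_def using that assms by (auto intro!: derivative_eq_intros simp: algebra_simps)
      moreover have "K * (1 - \<beta>) = 2 powr \<beta> / \<beta>"
        using assms by (simp add: K_def)
      ultimately show ?thesis
        by (simp only: right_diff_distrib[symmetric] mult.assoc[symmetric])
    qed
    have isCont: "isCont (\<lambda>a. (2 powr \<beta> / \<beta>) * ((t - a) powr (-\<beta>) - (T - a) powr (-\<beta>))) a"
      if "0 < a" "a < s" for a
      using that assms by (intro continuous_intros) auto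
    have nonneg: "0 \<le> (2 powr \<beta> / \<beta>) * ((t - a) powr (-\<beta>) - (T - a) powr (-\<beta>))"
      if "0 < a" "a < s" for a
      using that assms powr_mono2'[of "-\<beta>" "t - a" "T - a"] by simp
    show ?thesis
      using FTC_Ioo_nonneg(1,3)[OF \<open>0 < s\<close> cont deriv isCont nonneg] by simp
  qed simp
  then show "(\<integral>\<^sup>+a. ennreal ((2 powr \<beta> / \<beta>) * ((t - a) powr (-\<beta>) - (T - a) powr (-\<beta>))) * indicator {0<..<s} a \<partial>lborel)
     = ennreal (2 powr \<beta> / (\<beta> * (1 - \<beta>)) *
         (t powr (1-\<beta>) - (t - s) powr (1-\<beta>) - T powr (1-\<beta>) + (T - s) powr (1-\<beta>)))"
    and "0 \<le> 2 powr \<beta> / (\<beta> * (1 - \<beta>)) *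
         (t powr (1-\<beta>) - (t - s) powr (1-\<beta>) - T powr (1-\<beta>) + (T - s) powr (1-\<beta>))"
    unfolding K_def[symmetric] H_diff[symmetric] by auto
qed

section \<open>The white noise on light cones\<close>

lemma centered_gaussian_family_white_noise:
  fixes \<nu> :: "'b measure" and M :: "'b set \<Rightarrow> 'a \<Rightarrow> real"
    and A :: "'i \<Rightarrow> 'b set" and W :: "'i \<Rightarrow> 'a \<Rightarrow> real"
  assumes noise: "gaussian_white_noise P \<nu> M" and "inj_on A I"
    and A: "\<And>i. i \<in> I \<Longrightarrow> A i \<in> sets \<nu>" "\<And>i. i \<in> I \<Longrightarrow> emeasure \<nu> (A i) < \<infinity>"
    and W: "\<And>i. i \<in> I \<Longrightarrow> W i = M (A i)"
  shows "centered_gaussian_family P I W (\<lambda>i j. measure \<nu> (A i \<inter> A j))"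
proof -
  let ?S = "{A \<in> sets \<nu>. emeasure \<nu> A < \<infinity>}"
  have M: "centered_gaussian_family P ?S M (\<lambda>A B. measure \<nu> (A \<inter> B))"
    using noise by (simp add: gaussian_white_noise_def)
  have "jointly_gaussian P I W"
    unfolding jointly_gaussian_def
  proof (intro allI impI)
    fix J and a :: "'i \<Rightarrow> real" assume J: "J \<subseteq> I" "finite J"
    define b where "b S = a (the_inv_into J A S)" for S
    have "inj_on A J"
      using \<open>inj_on A I\<close> J(1) by (rule inj_on_subset)
    have "A ` J \<subseteq> ?S" "finite (A ` J)"
      using J A by auto
    then have "gaussian_rv P (\<lambda>\<omega>. \<Sum>S\<in>A ` J. b S * M S \<omega>)"
      using M unfolding centered_gaussian_family_def jointly_gaussian_def by blast
    moreover have "(\<Sum>S\<in>A ` J. b S * M S \<omega>) = (\<Sum>j\<in>J. a j * W j \<omega>)" for \<omega>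
      using \<open>inj_on A J\<close> J(1)
      by (simp add: sum.reindex b_def the_inv_into_f_f W subset_iff cong: sum.cong)
    ultimately show "gaussian_rv P (\<lambda>\<omega>. \<Sum>j\<in>J. a j * W j \<omega>)"
      by simp
  qed
  then show ?thesis
    using M A W unfolding centered_gaussian_family_def by simp
qed

definition light_cone :: "real \<Rightarrow> (real \<times> real) set" where
  "light_cone t = {(x, u). \<bar>t - x\<bar> \<le> u}"

lemma light_cone_borel: "light_cone t \<in> sets borel"
proof -
  have "closed {z :: real \<times> real. \<bar>t - fst z\<bar> \<le> snd z}"
    by (intro closed_Collect_le continuous_intros)
  then show ?thesis
    unfolding light_cone_def by (simp add: borel_closed case_prod_beta')
qed

lemma inj_light_cone: "inj light_cone"
proof (rule injI)
  fix s t assume eq: "light_cone s = light_cone t"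
  have "(s, 0) \<in> light_cone s"
    by (simp add: light_cone_def)
  then have "(s, 0) \<in> light_cone t"
    by (simp only: eq)
  then show "s = t"
    by (simp add: light_cone_def)
qed

lemma half_powr_minus:
  fixes \<beta> d :: real
  assumes "0 < d"
  shows "1/2 * (d / 2) powr (-\<beta>-1) = 2 powr \<beta> * d powr (-\<beta>-1)"
  using assms by (simp add: powr_divide powr_diff powr_minus divide_simps)

definition control_density :: "real \<Rightarrow> real \<Rightarrow> real \<times> real \<Rightarrow> ennreal" where
  "control_density \<beta> T = (\<lambda>(x, u). ennreal (if 0 < u \<and> 0 < x - u \<and> x + u < T then u powr (-\<beta> - 1) else 0))"

lemma control_density_borel: "control_density \<beta> T \<in> borel_measurable borel"
proof -
  have "control_density \<beta> T \<in> borel_measurable (lborel \<Otimes>\<^sub>M lborel)"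
    unfolding control_density_def by measurable
  then show ?thesis
    by (simp add: lborel_prod)
qed

text \<open>The excluded lines \<open>a = s\<close> and \<open>b = t\<close> are null sets, on which the closed cones and
the open intervals on the right disagree.\<close>

lemma control_density_null_coordinates:
  fixes \<beta> T s t a b :: real
  assumes "s \<le> t" "a \<noteq> s" "b \<noteq> t"
  shows "ennreal (1/2) * (control_density \<beta> T ((a + b) / 2, (b - a) / 2) *
      indicator (light_cone s \<inter> light_cone t) ((a + b) / 2, (b - a) / 2)) =
    ennreal (2 powr \<beta> * (b - a) powr (-\<beta>-1)) * indicator {t<..<T} b * indicator {0<..<s} a"
proof (cases "0 < a \<and> a < s \<and> t < b \<and> b < T")
  case True
  then have "control_density \<beta> T ((a + b) / 2, (b - a) / 2) *
      indicator (light_cone s \<inter> light_cone t) ((a + b) / 2, (b - a) / 2) =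
    ennreal (((b - a) / 2) powr (-\<beta>-1))"
    using assms by (simp add: control_density_def light_cone_def abs_le_iff field_simps)
  moreover have "ennreal (1/2) * ennreal (((b - a) / 2) powr (-\<beta>-1)) =
      ennreal (1/2 * ((b - a) / 2) powr (-\<beta>-1))"
    by (rule ennreal_mult[symmetric]) auto
  ultimately show ?thesis
    using True assms half_powr_minus[of "b - a" \<beta>] by simp
next
  case False
  then have "control_density \<beta> T ((a + b) / 2, (b - a) / 2) *
      indicator (light_cone s \<inter> light_cone t) ((a + b) / 2, (b - a) / 2) = 0"
    using assms
    by (auto simp: control_density_def light_cone_def abs_le_iff field_simps split: split_indicator)
  then show ?thesis
    using False by (auto split: split_indicator)
qed

lemma emeasure_light_cone_inter:
  fixes \<beta> T s t :: real
  assumes "0 < \<beta>" "\<beta> < 1" "0 \<le> s" "s \<le> t" "t \<le> T"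
  shows "emeasure (control_measure \<beta> T) (light_cone s \<inter> light_cone t) =
    ennreal (2 powr \<beta> / (\<beta> * (1 - \<beta>)) *
      (t powr (1-\<beta>) - (t - s) powr (1-\<beta>) - T powr (1-\<beta>) + (T - s) powr (1-\<beta>)))"
proof -
  define \<phi> where "\<phi> z = control_density \<beta> T z * indicator (light_cone s \<inter> light_cone t) z" for z
  have [measurable]: "\<phi> \<in> borel_measurable borel"
    unfolding \<phi>_def using light_cone_borel control_density_borel by measurable
  have "emeasure (control_measure \<beta> T) (light_cone s \<inter> light_cone t) = (\<integral>\<^sup>+z. \<phi> z \<partial>lborel)"
    unfolding control_measure_def control_density_def[symmetric] \<phi>_def
    using light_cone_borel control_density_borel by (subst emeasure_density) auto
  also have "\<dots> = (\<integral>\<^sup>+a. \<integral>\<^sup>+b. ennreal (1/2) * \<phi> ((a + b) / 2, (b - a) / 2) \<partial>lborel \<partial>lborel)"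
    by (rule nn_integral_lborel_null_coordinates) measurable
  also have "\<dots> = (\<integral>\<^sup>+a. (\<integral>\<^sup>+b. ennreal (2 powr \<beta> * (b - a) powr (-\<beta>-1)) * indicator {t<..<T} b \<partial>lborel)
      * indicator {0<..<s} a \<partial>lborel)"
  proof (rule nn_integral_cong_AE)
    show "AE a in lborel. (\<integral>\<^sup>+b. ennreal (1/2) * \<phi> ((a + b) / 2, (b - a) / 2) \<partial>lborel) =
        (\<integral>\<^sup>+b. ennreal (2 powr \<beta> * (b - a) powr (-\<beta>-1)) * indicator {t<..<T} b \<partial>lborel)
          * indicator {0<..<s} a"
      using AE_lborel_singleton[of s]
    proof eventually_elim
      case (elim a)
      have "(\<integral>\<^sup>+b. ennreal (1/2) * \<phi> ((a + b) / 2, (b - a) / 2) \<partial>lborel) =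
          (\<integral>\<^sup>+b. ennreal (2 powr \<beta> * (b - a) powr (-\<beta>-1)) * indicator {t<..<T} b * indicator {0<..<s} a \<partial>lborel)"
        unfolding \<phi>_def using assms(4) elim
        by (intro nn_integral_cong_AE eventually_mono[OF AE_lborel_singleton[of t]]
            control_density_null_coordinates)
      then show ?case
        by (simp add: nn_integral_multc)
    qed
  qed
  also have "\<dots> = (\<integral>\<^sup>+a. ennreal ((2 powr \<beta> / \<beta>) * ((t - a) powr (-\<beta>) - (T - a) powr (-\<beta>)))
      * indicator {0<..<s} a \<partial>lborel)"
    using assms by (intro nn_integral_cong) (simp add: nn_integral_powr_minus_Ioo split: split_indicator)
  also have "\<dots> = ennreal (2 powr \<beta> / (\<beta> * (1 - \<beta>)) *
      (t powr (1-\<beta>) - (t - s) powr (1-\<beta>) - T powr (1-\<beta>) + (T - s) powr (1-\<beta>)))"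
    by (rule nn_integral_powr_diff_Ioo(1)[OF assms])
  finally show ?thesis .
qed

lemma measure_light_cone_inter:
  fixes \<beta> T s t :: real
  assumes "0 < \<beta>" "\<beta> < 1" "0 \<le> s" "s \<le> t" "t \<le> T"
  shows "measure (control_measure \<beta> T) (light_cone s \<inter> light_cone t) =
    2 powr \<beta> / (\<beta> * (1 - \<beta>)) *
      (t powr (1-\<beta>) - (t - s) powr (1-\<beta>) - T powr (1-\<beta>) + (T - s) powr (1-\<beta>))"
  using emeasure_light_cone_inter[OF assms] nn_integral_powr_diff_Ioo(2)[OF assms]
  by (simp add: measure_def)

lemma light_cone_finite_measure:
  fixes \<beta> T t :: real
  assumes "0 < \<beta>" "\<beta> < 1" "t \<in> {0..T}"
  shows "light_cone t \<in> sets (control_measure \<beta> T)"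
    and "emeasure (control_measure \<beta> T) (light_cone t) < \<infinity>"
  using emeasure_light_cone_inter[of \<beta> t t T] assms light_cone_borel
  by (auto simp: control_measure_def)

lemma centered_gaussian_family_light_cone_noise:
  fixes \<beta> T :: real
  assumes "0 < \<beta>" "\<beta> < 1" "gaussian_white_noise P (control_measure \<beta> T) M"
    and "\<And>t. t \<in> {0..T} \<Longrightarrow> W t = M (light_cone t)"
  shows "centered_gaussian_family P {0..T} W
    (\<lambda>s t. measure (control_measure \<beta> T) (light_cone s \<inter> light_cone t))"
  using assms light_cone_finite_measure[OF assms(1,2)]
  by (intro centered_gaussian_family_white_noise inj_on_subset[OF inj_light_cone]) auto

section \<open>The covariance of the sum\<close>

definition wiener_kernel :: "real \<Rightarrow> real \<Rightarrow> real \<Rightarrow> real \<Rightarrow> real" where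
  "wiener_kernel \<beta> T t x =
    sqrt (2 powr \<beta> / \<beta>) * sqrt (x powr (-\<beta>) + (T - x) powr (-\<beta>)) * indicator {0..t} x"

lemma wiener_kernel_borel: "wiener_kernel \<beta> T t \<in> borel_measurable borel"
  unfolding wiener_kernel_def by measurable

lemma integral_wiener_kernel_mult:
  assumes "0 < \<beta>" "\<beta> < 1" "s \<in> {0..T}" "t \<in> {0..T}"
  shows "(\<integral>x. wiener_kernel \<beta> T s x * wiener_kernel \<beta> T t x \<partial>restrict_space lborel {0..T}) =
    2 powr \<beta> / \<beta> * ((min s t powr (1-\<beta>) + T powr (1-\<beta>) - (T - min s t) powr (1-\<beta>)) / (1-\<beta>))"
proof -
  let ?h = "\<lambda>x. x powr (-\<beta>) + (T - x) powr (-\<beta>)"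
  have "(\<integral>x. wiener_kernel \<beta> T s x * wiener_kernel \<beta> T t x \<partial>restrict_space lborel {0..T}) =
      (\<integral>x. indicator {0..T} x *\<^sub>R (wiener_kernel \<beta> T s x * wiener_kernel \<beta> T t x) \<partial>lborel)"
    by (subst integral_restrict_space) auto
  also have "\<dots> = (\<integral>x. 2 powr \<beta> / \<beta> * (indicator {0..min s t} x * ?h x) \<partial>lborel)"
    using assms
    by (intro Bochner_Integration.integral_cong)
      (auto simp: wiener_kernel_def real_sqrt_mult[symmetric] split: split_indicator)
  also have "\<dots> = 2 powr \<beta> / \<beta> * (\<integral>x. indicator {0..min s t} x * ?h x \<partial>lborel)"
    by simp
  also have "\<dots> = 2 powr \<beta> / \<beta> * ((min s t powr (1-\<beta>) + T powr (1-\<beta>) - (T - min s t) powr (1-\<beta>)) / (1-\<beta>))"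
    using assms by (subst integral_Icc_powr_sum) auto
  finally show ?thesis .
qed

lemma light_cone_cov_add_wiener_cov:
  fixes \<beta> T s t :: real
  assumes "0 < \<beta>" "\<beta> < 1" "s \<in> {0..T}" "t \<in> {0..T}"
  shows "measure (control_measure \<beta> T) (light_cone s \<inter> light_cone t) +
      2 powr \<beta> / \<beta> * ((min s t powr (1-\<beta>) + T powr (1-\<beta>) - (T - min s t) powr (1-\<beta>)) / (1-\<beta>)) =
    2 powr \<beta> / (\<beta> * (1 - \<beta>)) * (s powr (1-\<beta>) + t powr (1-\<beta>) - \<bar>t - s\<bar> powr (1-\<beta>))"
proof -
  define K where "K = 2 powr \<beta> / (\<beta> * (1 - \<beta>))"
  have scale: "2 powr \<beta> / \<beta> * (x / (1-\<beta>)) = K * x" for x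
    by (simp add: K_def)
  have cone: "measure (control_measure \<beta> T) (light_cone s \<inter> light_cone t) =
      K * (max s t powr (1-\<beta>) - \<bar>t - s\<bar> powr (1-\<beta>) - T powr (1-\<beta>) + (T - min s t) powr (1-\<beta>))"
    using assms measure_light_cone_inter[of \<beta> s t T] measure_light_cone_inter[of \<beta> t s T]
    unfolding K_def by (cases "s \<le> t") (auto simp: Int_commute)
  have "measure (control_measure \<beta> T) (light_cone s \<inter> light_cone t) +
      2 powr \<beta> / \<beta> * ((min s t powr (1-\<beta>) + T powr (1-\<beta>) - (T - min s t) powr (1-\<beta>)) / (1-\<beta>)) =
    K * ((max s t powr (1-\<beta>) - \<bar>t - s\<bar> powr (1-\<beta>) - T powr (1-\<beta>) + (T - min s t) powr (1-\<beta>))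
      + (min s t powr (1-\<beta>) + T powr (1-\<beta>) - (T - min s t) powr (1-\<beta>)))"
    unfolding cone scale distrib_left ..
  also have "\<dots> = K * (s powr (1-\<beta>) + t powr (1-\<beta>) - \<bar>t - s\<bar> powr (1-\<beta>))"
    by (cases "s \<le> t") (simp_all add: max_def min_def)
  finally show ?thesis
    unfolding K_def .
qed

lemma fbm_on_centered_gaussian_family:
  assumes X: "centered_gaussian_family M {0..T} X (\<lambda>s t. K * (s powr (2*H) + t powr (2*H) - \<bar>t - s\<bar> powr (2*H)))"
    and "K > 0"
  shows "\<exists>c > 0. fbm_on M H T (\<lambda>t \<omega>. X t \<omega> / c)"
proof (intro exI conjI)
  show "sqrt (2 * K) > 0"
    using \<open>K > 0\<close> by simp
  have "centered_gaussian_family M {0..T} (\<lambda>t \<omega>. X t \<omega> / sqrt (2 * K))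
      (\<lambda>s t. K * (s powr (2*H) + t powr (2*H) - \<bar>t - s\<bar> powr (2*H)) / (sqrt (2 * K))\<^sup>2)"
    by (rule centered_gaussian_family_divide[OF X])
  then show "fbm_on M H T (\<lambda>t \<omega>. X t \<omega> / sqrt (2 * K))"
    using \<open>K > 0\<close> unfolding fbm_on_def centered_gaussian_family_def by auto
qed

theorem proposition2:
  fixes P :: "'a measure" and T \<beta> :: real
    and M :: "(real \<times> real) set \<Rightarrow> 'a \<Rightarrow> real"
    and W Y B :: "real \<Rightarrow> 'a \<Rightarrow> real"
  assumes "prob_space P"
    and "T > 0" and "0 < \<beta>" and "\<beta> < 1"
    and "gaussian_white_noise P (control_measure \<beta> T) M"
    and "\<And>t. t \<in> {0..T} \<Longrightarrow> W t = M {(x, u). \<bar>t - x\<bar> \<le> u}"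
    and "brownian_motion_on P T B"
    and "prob_space.indep_var P
           (Pi\<^sub>M {0..T} (\<lambda>_. borel)) (\<lambda>\<omega>. \<lambda>t\<in>{0..T}. W t \<omega>)
           (Pi\<^sub>M {0..T} (\<lambda>_. borel)) (\<lambda>\<omega>. \<lambda>t\<in>{0..T}. B t \<omega>)"
    and "\<And>t. t \<in> {0..T} \<Longrightarrow> wiener_integral P T B
           (\<lambda>x. sqrt (2 powr \<beta> / \<beta>) * sqrt (x powr (-\<beta>) + (T - x) powr (-\<beta>))
                 * indicator {0..t} x)
           (Y t)"
  shows "\<exists>c > 0. fbm_on P ((1 - \<beta>) / 2) T (\<lambda>t \<omega>. (W t \<omega> + Y t \<omega>) / c)"
proof -
  interpret brownian_motion P T B
    using assms(1,7) by (intro brownian_motion.intro brownian_motion_axioms.intro)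
  have Y: "wiener_integral P T B (wiener_kernel \<beta> T t) (Y t)" if "t \<in> {0..T}" for t
    using assms(9)[OF that] by (simp add: wiener_kernel_def[abs_def])
  have W: "centered_gaussian_family P {0..T} W
      (\<lambda>s t. measure (control_measure \<beta> T) (light_cone s \<inter> light_cone t))"
    using assms(6) by (intro centered_gaussian_family_light_cone_noise[OF assms(3-5)]) (simp add: light_cone_def)
  have "centered_gaussian_family P {0..T} (\<lambda>t \<omega>. W t \<omega> + Y t \<omega>)
      (\<lambda>s t. measure (control_measure \<beta> T) (light_cone s \<inter> light_cone t) +
        2 powr \<beta> / \<beta> * ((min s t powr (1-\<beta>) + T powr (1-\<beta>) - (T - min s t) powr (1-\<beta>)) / (1-\<beta>)))"
    using wiener_integral_L2_span[OF Y wiener_kernel_borel] wiener_integral_mean[OF Y wiener_kernel_borel]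
      wiener_integral_cov[OF Y wiener_kernel_borel Y wiener_kernel_borel]
      integral_wiener_kernel_mult[OF assms(3,4)]
    by (intro centered_gaussian_family_add_indep[OF W jointly_gaussian assms(8)]) simp_all
  then have "centered_gaussian_family P {0..T} (\<lambda>t \<omega>. W t \<omega> + Y t \<omega>)
      (\<lambda>s t. 2 powr \<beta> / (\<beta> * (1 - \<beta>)) * (s powr (1-\<beta>) + t powr (1-\<beta>) - \<bar>t - s\<bar> powr (1-\<beta>)))"
    by (rule centered_gaussian_family_cong[OF _ light_cone_cov_add_wiener_cov[OF assms(3,4)]])
  moreover have exponent: "2 * ((1 - \<beta>) / 2) = 1 - \<beta>"
    by simp
  ultimately show ?thesis
    using fbm_on_centered_gaussian_family[where H="(1 - \<beta>) / 2" and K="2 powr \<beta> / (\<beta> * (1 - \<beta>))"]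
      assms(3,4)
    unfolding exponent by simp
qed

end
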